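(* Let $1\le k\le n-1$ and let $\lambda$ be the full $k\times(n-k)$ rectangle, i.e. $\lambda_i=n-k$ for $i=1,\dots,k$. Then in the module $M$ one has $X_\lambda\,\mathbf 1=C^J_{w_\lambda}$ (here $w_\lambda$ is the longest element of $W^J$, with $w_\lambda(\mathbf 1)=(-,\dots,-,+,\dots,+)$, $n-k$ minuses followed by $k$ pluses).
   Context: Let $\mathcal H$ be the Hecke algebra of $S_n$ over $\mathbb Q(v)$, generated by $T_1,\dots,T_{n-1}$ subject to the braid relations and $(T_i-v)(T_i+v^{-1})=0$; $T_w$ denotes $T_{i_1}\cdots T_{i_\ell}$ for a reduced expression $w=s_{i_1}\cdots s_{i_\ell}$. The bar involution on $\mathcal H$ is the ring involution with $\overline v=v^{-1}$, $\overline{T_w}=T_{w^{-1}}^{-1}$. Let $E$ be the set of sequences of $n$ signs $\pm$ with exactly $k$ pluses; $S_n$ acts on $E$ by permuting positions. Let $M=\bigoplus_{\varepsilon\in E}\mathbb Q(v)\varepsilon$ with $\mathcal H$-action: $T_i\varepsilon=s_i\varepsilon$ if $(\varepsilon_i,\varepsilon_{i+1})=(+,-)$; $T_i\varepsilon=-v^{-1}\varepsilon$ if $(\varepsilon_i,\varepsilon_{i+1})\in\{(+,+),(-,-)\}$; $T_i\varepsilon=s_i\varepsilon+(v-v^{-1})\varepsilon$ if $(\varepsilon_i,\varepsilon_{i+1})=(-,+)$. Let $\mathbf 1=(+^k,-^{n-k})$; $M$ carries the bar involution $\overline{h\mathbf 1}=\overline h\,\mathbf 1$. $W^J$ denotes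 minimal length representatives of $S_n/(S_k\times S_{n-k})$, and $y\mapsto y(\mathbf 1)$ is a bijection $W^J\to E$. $C^J_y$ ($y\in W^J$) is the unique element of $M$ with $\overline{C^J_y}=C^J_y$ and $C^J_y-y(\mathbf 1)\in\sum_{\varepsilon}v\mathbb Z[v]\varepsilon$. For a Young diagram $\lambda$ with rows $\lambda_1\ge\dots\ge\lambda_\ell>0$ and boxes $(i,j)$, $1\le j\le\lambda_i$: $w_\lambda=P_\ell\cdots P_1$, $P_i=s_{k+\lambda_i-i}s_{k+\lambda_i-i-1}\cdots s_{k+1-i}$; $r_{ij}=\max(r_{i,j+1},r_{i+1,j})+1$ with $r_{ij}=0$ for $(i,j)\notin\lambda$; $[r]=(v^r-v^{-r})/(v-v^{-1})$; $X_\lambda=Q_\ell\cdots Q_1$ with $Q_i=\prod_{j=\lambda_i}^{1}\bigl(T_{k+j-i}-v^{r_{ij}}/[r_{ij}]\bigr)$, factors ordered from $j=\lambda_i$ (leftmost) to $j=1$ (rightmost). *)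

theory Defs
  imports Main "HOL-Computational_Algebra.Polynomial" "HOL-Computational_Algebra.Fraction_Field"
begin

type_synonym qv = "rat poly fract"

definition V :: qv where "V = Fract [:0, 1:] 1"

definition qconst :: "rat \<Rightarrow> qv" where "qconst c = Fract [:c:] 1"

definition subst_inv :: "rat poly \<Rightarrow> qv" where
  "subst_inv p = poly (map_poly qconst p) (inverse V)"

text \<open>Bar involution on Q(v): v \<mapsto> v^{-1}.\<close>
definition barQ :: "qv \<Rightarrow> qv" where
  "barQ x = (SOME y. \<exists>p q. q \<noteq> 0 \<and> x = Fract p q \<and> y = subst_inv p / subst_inv q)"

definition vZv :: "qv set" where
  "vZv = {Fract p 1 | p. (\<forall>i. coeff p i \<in> \<int>) \<and> coeff p 0 = 0}"

definition qint :: "nat \<Rightarrow> qv" where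
  "qint r = (V ^ r - inverse V ^ r) / (V - inverse V)"

text \<open>A sign sequence is a bool list; True = +, False = -. Position i (1-indexed)
  is list index i-1.\<close>
definition Eset :: "nat \<Rightarrow> nat \<Rightarrow> bool list set" where
  "Eset n k = {e. length e = n \<and> length (filter id e) = k}"

definition swp :: "nat \<Rightarrow> bool list \<Rightarrow> bool list" where
  "swp i e = e[i - 1 := e ! i, i := e ! (i - 1)]"

text \<open>Action of a word s_{i_1} ... s_{i_l} (given as list [i_1,...,i_l]) on E:
  the rightmost reflection acts first.\<close>
definition act_word :: "nat list \<Rightarrow> bool list \<Rightarrow> bool list" where
  "act_word ws e = foldr swp ws e"

definition one_seq :: "nat \<Rightarrow> nat \<Rightarrow> bool list" where
  "one_seq n k = replicate k True @ replicate (n - k) False"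

text \<open>Elements of M are coefficient functions E \<rightarrow> Q(v) (zero outside E).\<close>
type_synonym modM = "bool list \<Rightarrow> qv"

definition inM :: "nat \<Rightarrow> nat \<Rightarrow> modM \<Rightarrow> bool" where
  "inM n k m \<longleftrightarrow> (\<forall>e. e \<notin> Eset n k \<longrightarrow> m e = 0)"

definition basis :: "bool list \<Rightarrow> modM" where
  "basis e = (\<lambda>x. if x = e then 1 else 0)"

text \<open>Action of T_i on M, written coordinatewise: it is the linear extension of
  T_i e = s_i e for (+,-), = -v^{-1} e for (+,+),(-,-), = s_i e + (v - v^{-1}) e for (-,+).\<close>
definition Tact :: "nat \<Rightarrow> nat \<Rightarrow> nat \<Rightarrow> modM \<Rightarrow> modM" where
  "Tact n k i m = (\<lambda>x. if x \<notin> Eset n k then 0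
     else if x ! (i - 1) = x ! i then - inverse V * m x
     else if x ! (i - 1) \<and> \<not> x ! i then m (swp i x)
     else m (swp i x) + (V - inverse V) * m x)"

text \<open>Expressions in the generators T_i, their inverses and scalars of Q(v).
  H is the quotient of this free algebra by the Hecke relations; every expression
  acts on M through this quotient.\<close>
datatype hexp = HScal qv | HT nat | HTinv nat | HAdd hexp hexp | HMul hexp hexp

fun gens :: "hexp \<Rightarrow> nat set" where
  "gens (HScal c) = {}"
| "gens (HT i) = {i}"
| "gens (HTinv i) = {i}"
| "gens (HAdd a b) = gens a \<union> gens b"
| "gens (HMul a b) = gens a \<union> gens b"

definition valid_h :: "nat \<Rightarrow> hexp \<Rightarrow> bool" where
  "valid_h n h \<longleftrightarrow> gens h \<subseteq> {1..n - 1}"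

text \<open>Action on M; T_i^{-1} = T_i - (v - v^{-1}) in H by the quadratic relation.\<close>
fun hact :: "nat \<Rightarrow> nat \<Rightarrow> hexp \<Rightarrow> modM \<Rightarrow> modM" where
  "hact n k (HScal c) m = (\<lambda>x. c * m x)"
| "hact n k (HT i) m = Tact n k i m"
| "hact n k (HTinv i) m = (\<lambda>x. Tact n k i m x - (V - inverse V) * m x)"
| "hact n k (HAdd a b) m = (\<lambda>x. hact n k a m x + hact n k b m x)"
| "hact n k (HMul a b) m = hact n k a (hact n k b m)"

fun barH :: "hexp \<Rightarrow> hexp" where
  "barH (HScal c) = HScal (barQ c)"
| "barH (HT i) = HTinv i"
| "barH (HTinv i) = HT i"
| "barH (HAdd a b) = HAdd (barH a) (barH b)"
| "barH (HMul a b) = HMul (barH a) (barH b)"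

definition hprod :: "hexp list \<Rightarrow> hexp" where
  "hprod hs = foldr HMul hs (HScal 1)"

definition barM :: "nat \<Rightarrow> nat \<Rightarrow> modM \<Rightarrow> modM" where
  "barM n k m = (SOME y. \<exists>h. valid_h n h \<and> hact n k h (basis (one_seq n k)) = m
                      \<and> y = hact n k (barH h) (basis (one_seq n k)))"

text \<open>Parabolic KL basis element C^J_y, indexed by e = y(1) \<in> E.\<close>
definition CJ :: "nat \<Rightarrow> nat \<Rightarrow> bool list \<Rightarrow> modM" where
  "CJ n k e = (THE c. inM n k c \<and> barM n k c = c
                 \<and> (\<forall>x \<in> Eset n k. c x - basis e x \<in> vZv))"

text \<open>A Young diagram is the list of its rows [lambda_1, ..., lambda_l];
  boxes (i,j) are 1-indexed.\<close>
definition inYD :: "nat list \<Rightarrow> nat \<Rightarrow> nat \<Rightarrow> bool" where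
  "inYD lam i j \<longleftrightarrow> 1 \<le> i \<and> i \<le> length lam \<and> 1 \<le> j \<and> j \<le> lam ! (i - 1)"

function rr :: "nat list \<Rightarrow> nat \<Rightarrow> nat \<Rightarrow> nat" where
  "rr lam i j = (if inYD lam i j then max (rr lam i (j + 1)) (rr lam (i + 1) j) + 1 else 0)"
  by pat_completeness auto
termination
proof (relation "measure (\<lambda>(lam, i, j). length lam + sum_list lam + 2 - (i + j))")
  show "wf (measure (\<lambda>(lam, i, j). length lam + sum_list lam + 2 - (i + j)))" by simp
next
  fix lam i j
  assume h: "inYD lam i j"
  have "lam ! (i - 1) \<le> sum_list lam"
    using h unfolding inYD_def
    by (metis elem_le_sum_list diff_less le_eq_less_or_eq less_le_trans zero_less_one)
  with h have "i + j + 1 < length lam + sum_list lam + 2" unfolding inYD_def by linarith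
  then show "((lam, i, j + 1), lam, i, j) \<in> measure (\<lambda>(lam, i, j). length lam + sum_list lam + 2 - (i + j))"
    and "((lam, i + 1, j), lam, i, j) \<in> measure (\<lambda>(lam, i, j). length lam + sum_list lam + 2 - (i + j))"
    by auto
qed

declare rr.simps [simp del]

definition Pword :: "nat \<Rightarrow> nat list \<Rightarrow> nat \<Rightarrow> nat list" where
  "Pword k lam i = rev [k + 1 - i ..< k + lam ! (i - 1) + 1 - i]"

definition wword :: "nat \<Rightarrow> nat list \<Rightarrow> nat list" where
  "wword k lam = concat (map (Pword k lam) (rev [1 ..< length lam + 1]))"

definition Qfac :: "nat \<Rightarrow> nat list \<Rightarrow> nat \<Rightarrow> hexp" where
  "Qfac k lam i = hprod (map (\<lambda>j. HAdd (HT (k + j - i))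
        (HScal (- (V ^ rr lam i j / qint (rr lam i j))))) (rev [1 ..< lam ! (i - 1) + 1]))"

definition Xlam :: "nat \<Rightarrow> nat list \<Rightarrow> hexp" where
  "Xlam k lam = hprod (map (Qfac k lam) (rev [1 ..< length lam + 1]))"

end

theory Submission
  imports Defs
begin

text \<open>
  Let \<open>D\<close> be the vector whose coefficient at \<open>y(\<one>)\<close> is \<open>(-v)\<^bsup>\<ell>(w\<^sub>\<lambda>) - \<ell>(y)\<^esup>\<close> (\<open>sign_vec\<close> below).
  Up to scalars, \<open>D\<close> is the only vector of \<open>M\<close> on which every \<open>T\<^sub>i\<close> acts by \<open>-v\<^sup>-\<^sup>1\<close>.

  \<open>D = C\<^sup>J\<^sub>w\<^sub>\<lambda>\<close>: the bar involution of \<open>M\<close> is realised by an explicit antilinear operator (reverse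
  the sign sequence, bar the coefficients, apply \<open>T\<^sub>w\<^sub>0\<^sup>-\<^sup>1\<close>), which is unitriangular with respect to
  the length. Hence it maps \<open>D\<close> to a multiple of \<open>D\<close> with the same leading coefficient, so \<open>D\<close> is
  bar invariant; its other coefficients lie in \<open>v\<int>[v]\<close>, and unitriangularity makes such an
  element unique.

  \<open>X\<^sub>\<lambda> \<one> = D\<close>: for each \<open>g\<close>, a factor \<open>T\<^sub>h - v\<close> can be split off from \<open>\<one>\<close> and pushed, by the
  Yang-Baxter equation satisfied by the factors \<open>T - v\<^sup>r/[r]\<close> along the rows or the columns of the
  rectangle, to the left end of \<open>X\<^sub>\<lambda>\<close>, where it arrives as \<open>T\<^sub>g - v\<close>. As
  \<open>(T\<^sub>g + v\<^sup>-\<^sup>1)(T\<^sub>g - v) = 0\<close>, \<open>X\<^sub>\<lambda> \<one>\<close> is a multiple of \<open>D\<close>, and its coefficient at \<open>w\<^sub>\<lambda>(\<one>)\<close> is \<open>1\<close>.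
\<close>

section \<open>The bar involution of Q(v)\<close>

definition fract_of_poly :: "rat poly \<Rightarrow> qv" where
  "fract_of_poly p = Fract p 1"

lemma fract_of_poly_add: "fract_of_poly (p + q) = fract_of_poly p + fract_of_poly q"
  by (simp add: fract_of_poly_def)

lemma fract_of_poly_mult: "fract_of_poly (p * q) = fract_of_poly p * fract_of_poly q"
  by (simp add: fract_of_poly_def)

lemma fract_of_poly_1: "fract_of_poly 1 = 1"
  by (simp add: fract_of_poly_def One_fract_def)

lemma fract_of_poly_minus: "fract_of_poly (- p) = - fract_of_poly p"
  by (simp add: fract_of_poly_def)

lemma fract_of_poly_power: "fract_of_poly (p ^ j) = fract_of_poly p ^ j"
  by (induct j) (simp_all add: fract_of_poly_1 fract_of_poly_mult)

lemma fract_of_poly_inject: "fract_of_poly p = fract_of_poly q \<longleftrightarrow> p = q"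
  by (simp add: fract_of_poly_def eq_fract)

lemma fract_of_poly_eq_0_iff: "fract_of_poly p = 0 \<longleftrightarrow> p = 0"
  by (simp add: fract_of_poly_def eq_fract Zero_fract_def)

lemma V_eq: "V = fract_of_poly [:0, 1:]"
  by (simp add: V_def fract_of_poly_def)

lemma V_nonzero [simp]: "V \<noteq> 0"
  by (simp add: V_eq fract_of_poly_eq_0_iff)

lemma V_power_neq_1: "0 < m \<Longrightarrow> V ^ m \<noteq> 1"
proof
  assume "0 < m" and "V ^ m = 1"
  then have "[:0, 1::rat:] ^ m = 1"
    by (simp add: V_eq fract_of_poly_power flip: fract_of_poly_1 fract_of_poly_inject)
  then have "degree ([:0, 1::rat:] ^ m) = 0" by simp
  with \<open>0 < m\<close> show False by (simp add: degree_power_eq)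
qed

lemma qconst_eq: "qconst c = fract_of_poly [:c:]"
  by (simp add: qconst_def fract_of_poly_def)

lemma qconst_0 [simp]: "qconst 0 = 0"
  by (simp add: qconst_eq fract_of_poly_def Zero_fract_def)

lemma qconst_1 [simp]: "qconst 1 = 1"
  by (simp add: qconst_eq fract_of_poly_def One_fract_def one_pCons)

lemma qconst_add: "qconst (a + b) = qconst a + qconst b"
  by (simp add: qconst_eq flip: fract_of_poly_add)

lemma qconst_mult: "qconst (a * b) = qconst a * qconst b"
  by (simp add: qconst_eq ac_simps flip: fract_of_poly_mult)

lemma qconst_inject: "qconst a = qconst b \<longleftrightarrow> a = b"
  by (simp add: qconst_eq fract_of_poly_inject)

lemma degree_map_qconst [simp]: "degree (map_poly qconst p) = degree p"
  by (rule degree_map_poly) (metis qconst_0 qconst_inject)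

lemma poly_map_qconst_V: "poly (map_poly qconst p) V = fract_of_poly p"
proof (induct p)
  case (pCons a p)
  have "pCons a p = [:a:] + [:0, 1:] * p" by simp
  then have "fract_of_poly (pCons a p) = qconst a + V * fract_of_poly p"
    by (metis fract_of_poly_add fract_of_poly_mult V_eq qconst_eq)
  with pCons show ?case by (simp add: map_poly_pCons)
qed (simp add: fract_of_poly_def Zero_fract_def)

lemma reflect_poly_map_qconst: "reflect_poly (map_poly qconst p) = map_poly qconst (reflect_poly p)"
  by (rule poly_eqI) (simp add: coeff_reflect_poly coeff_map_poly)

lemma subst_inv_reflect:
  "fract_of_poly (reflect_poly p) = V ^ degree p * subst_inv p"
proof -
  have "poly (reflect_poly (map_poly qconst p)) V
      = V ^ degree (map_poly qconst p) * poly (map_poly qconst p) (inverse V)"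
    by (rule poly_reflect_poly_nz) simp
  then show ?thesis by (simp add: reflect_poly_map_qconst poly_map_qconst_V subst_inv_def)
qed

lemma subst_inv_0 [simp]: "subst_inv 0 = 0"
  by (simp add: subst_inv_def)

lemma subst_inv_1 [simp]: "subst_inv 1 = 1"
  by (simp add: subst_inv_def one_pCons map_poly_pCons)

lemma subst_inv_pCons: "subst_inv (pCons a p) = qconst a + inverse V * subst_inv p"
  by (simp add: subst_inv_def map_poly_pCons)

lemma subst_inv_add: "subst_inv (p + q) = subst_inv p + subst_inv q"
  by (induct p q rule: poly_induct2) (simp_all add: subst_inv_pCons qconst_add algebra_simps)

lemma subst_inv_smult: "subst_inv (smult a q) = qconst a * subst_inv q"
  by (induct q) (simp_all add: subst_inv_pCons qconst_mult algebra_simps)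

lemma subst_inv_mult: "subst_inv (p * q) = subst_inv p * subst_inv q"
proof (induct p)
  case (pCons a p)
  have "subst_inv (pCons 0 (p * q)) = inverse V * subst_inv (p * q)"
    using subst_inv_pCons[of 0 "p * q"] by simp
  with pCons show ?case by (simp add: subst_inv_add subst_inv_smult subst_inv_pCons algebra_simps)
qed simp

lemma subst_inv_nonzero: "q \<noteq> 0 \<Longrightarrow> subst_inv q \<noteq> 0"
  using subst_inv_reflect[of q] by (auto simp: fract_of_poly_eq_0_iff)

lemma barQ_Fract: "q \<noteq> 0 \<Longrightarrow> barQ (Fract p q) = subst_inv p / subst_inv q"
  unfolding barQ_def
proof (rule some_equality)
  fix y assume "\<exists>p' q'. q' \<noteq> 0 \<and> Fract p q = Fract p' q' \<and> y = subst_inv p' / subst_inv q'"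
    and q: "q \<noteq> 0"
  then obtain p' q' where "q' \<noteq> 0" "p * q' = p' * q" "y = subst_inv p' / subst_inv q'"
    by (auto simp: eq_fract)
  with q show "y = subst_inv p / subst_inv q"
    by (metis subst_inv_mult subst_inv_nonzero frac_eq_eq)
qed blast

lemma barQ_add: "barQ (x + y) = barQ x + barQ y"
proof (cases x; cases y)
  fix a b c d assume x: "x = Fract a b" "b \<noteq> 0" and y: "y = Fract c d" "d \<noteq> 0"
  then have "subst_inv b \<noteq> 0" "subst_inv d \<noteq> 0" by (auto simp: subst_inv_nonzero)
  with x y show ?thesis
    by (simp add: barQ_Fract subst_inv_add subst_inv_mult add_frac_eq)
qed

lemma barQ_mult: "barQ (x * y) = barQ x * barQ y"
  by (cases x; cases y) (simp add: barQ_Fract subst_inv_mult)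

lemma barQ_0 [simp]: "barQ 0 = 0"
  using barQ_Fract[of 1 0] by (simp add: Zero_fract_def)

lemma barQ_1 [simp]: "barQ 1 = 1"
  using barQ_Fract[of 1 1] by (simp add: One_fract_def)

lemma barQ_minus: "barQ (- x) = - barQ x"
  using barQ_add[of x "- x"] by (simp add: eq_neg_iff_add_eq_0)

lemma barQ_diff: "barQ (x - y) = barQ x - barQ y"
  using barQ_add[of x "- y"] by (simp add: barQ_minus)

lemma barQ_V: "barQ V = inverse V"
  using barQ_Fract[of 1 "[:0, 1:]"] by (simp add: V_def subst_inv_def map_poly_pCons)

lemma barQ_inverse: "barQ (inverse x) = inverse (barQ x)"
proof (cases "x = 0")
  case False
  obtain a b where x: "x = Fract a b" "b \<noteq> 0" by (cases x)
  with False have "a \<noteq> 0" by (auto simp: Zero_fract_def eq_fract)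
  with x show ?thesis by (simp add: barQ_Fract)
qed simp

lemma barQ_inverse_V: "barQ (inverse V) = V"
  by (simp add: barQ_inverse barQ_V)

lemmas barQ_simps = barQ_mult barQ_add barQ_minus barQ_diff barQ_V barQ_inverse_V

section \<open>The generators acting on M\<close>

abbreviation vdiff :: qv where "vdiff \<equiv> V - inverse V"

text \<open>The quadratic relation gives \<open>T\<^sub>i\<^sup>-\<^sup>1 = T\<^sub>i - vdiff\<close>, so \<open>Tminus n k i vdiff\<close> acts as \<open>T\<^sub>i\<^sup>-\<^sup>1\<close>.\<close>

definition Tminus :: "nat \<Rightarrow> nat \<Rightarrow> nat \<Rightarrow> qv \<Rightarrow> modM \<Rightarrow> modM" where
  "Tminus n k i c m = (\<lambda>x. Tact n k i m x - c * m x)"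

lemma Tminus_apply: "Tminus n k i c m x = Tact n k i m x - c * m x"
  by (simp add: Tminus_def)

lemma Tact_eq_Tminus: "Tact n k i m = (\<lambda>x. Tminus n k i c m x + c * m x)"
  by (simp add: Tminus_def)

lemma Eset_length: "x \<in> Eset n k \<Longrightarrow> length x = n"
  by (simp add: Eset_def)

lemma split_at_window:
  assumes "Suc i < length x"
  obtains xs a b ys where "x = xs @ a # b # ys" "length xs = i"
proof -
  have "drop i x = x ! i # x ! Suc i # drop (Suc (Suc i)) x"
    using assms by (simp add: Cons_nth_drop_Suc)
  then show ?thesis
    using that[of "take i x"] assms by (metis append_take_drop_id length_take min_absorb2 less_imp_le Suc_lessD)
qed

lemma split_at_window3:
  assumes "Suc (Suc i) < length x"
  obtains xs a b c ys where "x = xs @ a # b # c # ys" "length xs = i"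
proof -
  obtain xs a b zs where x: "x = xs @ a # b # zs" "length xs = i"
    by (rule split_at_window[of i x]) (use assms in auto)
  with assms obtain c ys where "zs = c # ys" by (cases zs) auto
  with x that show ?thesis by blast
qed

lemma split_at_two_windows:
  assumes "i + 2 \<le> j" "Suc j < length x"
  obtains xs a b zs c d ys where "x = xs @ a # b # zs @ c # d # ys" "length xs = i" "length zs = j - i - 2"
proof -
  obtain xs a b rest where x: "x = xs @ a # b # rest" "length xs = i"
    by (rule split_at_window[of i x]) (use assms in auto)
  obtain zs c d ys where "rest = zs @ c # d # ys" "length zs = j - i - 2"
    by (rule split_at_window[of "j - i - 2" rest]) (use assms x in auto)
  with x that show ?thesis by blast
qed

lemma replicate_Suc_append: "replicate (Suc a) x @ l = replicate a x @ x # l"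
  by (induct a) auto

lemma Tact_at:
  assumes "i = Suc (length xs)"
  shows "Tact n k i m (xs @ a # b # ys) = (if xs @ a # b # ys \<notin> Eset n k then 0
     else if a = b then - inverse V * m (xs @ a # b # ys)
     else if a then m (xs @ b # a # ys)
     else m (xs @ b # a # ys) + vdiff * m (xs @ a # b # ys))"
  using assms by (simp add: Tact_def swp_def nth_append list_update_append)

lemma Tact_at2:
  assumes "i = Suc (Suc (length xs))"
  shows "Tact n k i m (xs @ a # b # c # ys) = (if xs @ a # b # c # ys \<notin> Eset n k then 0
     else if b = c then - inverse V * m (xs @ a # b # c # ys)
     else if b then m (xs @ a # c # b # ys)
     else m (xs @ a # c # b # ys) + vdiff * m (xs @ a # b # c # ys))"
  using Tact_at[of i "xs @ [a]"] assms by simp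

lemma Tact_at_far:
  assumes "j = length xs + length zs + 3"
  shows "Tact n k j m (xs @ a # b # zs @ c # d # ys) = (if xs @ a # b # zs @ c # d # ys \<notin> Eset n k then 0
     else if c = d then - inverse V * m (xs @ a # b # zs @ c # d # ys)
     else if c then m (xs @ a # b # zs @ d # c # ys)
     else m (xs @ a # b # zs @ d # c # ys) + vdiff * m (xs @ a # b # zs @ c # d # ys))"
  using Tact_at[of j "xs @ a # b # zs"] assms by simp

lemma Tact_outside: "x \<notin> Eset n k \<Longrightarrow> Tact n k i m x = 0"
  by (simp add: Tact_def)

lemma Tminus_outside: "x \<notin> Eset n k \<Longrightarrow> Tminus n k i c m x = - c * m x"
  by (simp add: Tminus_def Tact_def)

lemma Tminus_linear: "Tminus n k i c (\<lambda>x. a x + d * b x) = (\<lambda>x. Tminus n k i c a x + d * Tminus n k i c b x)"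
  by (rule ext) (simp add: Tminus_def Tact_def algebra_simps)

lemma Tact_scale: "Tact n k i (\<lambda>x. c * u x) = (\<lambda>x. c * Tact n k i u x)"
  by (rule ext) (simp add: Tact_def algebra_simps)

lemma Tminus_scale: "Tminus n k i d (\<lambda>x. c * u x) = (\<lambda>x. c * Tminus n k i d u x)"
  by (rule ext) (simp add: Tminus_def Tact_def algebra_simps)

lemma inM_Tminus: "inM n k m \<Longrightarrow> inM n k (Tminus n k i c m)"
  by (simp add: inM_def Tminus_outside)

lemma Tact_basis:
  assumes e: "e = xs @ a # b # ys" "e \<in> Eset n k" and i: "i = Suc (length xs)"
  shows "Tact n k i (basis e) = (if a = b then (\<lambda>x. - inverse V * basis e x)
     else if a then basis (xs @ b # a # ys)
     else (\<lambda>x. basis (xs @ b # a # ys) x + vdiff * basis e x))"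
proof
  fix x
  have swapped: "xs @ b # a # ys \<in> Eset n k" using e by (cases a; cases b) (simp_all add: Eset_def)
  show "Tact n k i (basis e) x = (if a = b then (\<lambda>x. - inverse V * basis e x)
     else if a then basis (xs @ b # a # ys)
     else (\<lambda>x. basis (xs @ b # a # ys) x + vdiff * basis e x)) x"
  proof (cases "x \<in> Eset n k")
    case False
    then have "x \<noteq> e" "x \<noteq> xs @ b # a # ys" using e swapped by auto
    with False show ?thesis by (cases a; cases b) (simp_all add: Tact_outside basis_def)
  next
    case True
    obtain xs' a' b' ys' where x: "x = xs' @ a' # b' # ys'" "length xs' = length xs"
      by (rule split_at_window[of "length xs" x]) (use e True in \<open>auto simp: Eset_def\<close>)
    with i have "i = Suc (length xs')" by simp
    with True e x show ?thesis
      by (cases a; cases b; cases a'; cases b') (auto simp: Tact_at basis_def)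
  qed
qed

lemma Tinv_basis_FT:
  assumes "xs @ False # True # ys \<in> Eset n k"
  shows "Tminus n k (Suc (length xs)) vdiff (basis (xs @ False # True # ys)) = basis (xs @ True # False # ys)"
  using Tact_basis[OF refl assms refl] by (simp add: Tminus_def)

lemma Tact_basis_TF:
  assumes "xs @ True # False # ys \<in> Eset n k"
  shows "Tact n k (Suc (length xs)) (basis (xs @ True # False # ys)) = basis (xs @ False # True # ys)"
  using Tact_basis[OF refl assms refl] by simp

lemma Tminus_basis_equal:
  assumes "xs @ b # b # ys \<in> Eset n k"
  shows "Tminus n k (Suc (length xs)) c (basis (xs @ b # b # ys)) = (\<lambda>x. (- inverse V - c) * basis (xs @ b # b # ys) x)"
  using Tact_basis[OF refl assms refl] by (simp add: Tminus_def algebra_simps)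

lemma Tminus_YBE:
  assumes rel: "c3 * (c1 + c2 - vdiff) = c1 * c2" and i: "1 \<le> i" "i + 2 \<le> n"
  shows "Tminus n k i c1 (Tminus n k (i + 1) c3 (Tminus n k i c2 m))
       = Tminus n k (i + 1) c2 (Tminus n k i c3 (Tminus n k (i + 1) c1 m))"
proof
  fix x
  show "Tminus n k i c1 (Tminus n k (i + 1) c3 (Tminus n k i c2 m)) x
      = Tminus n k (i + 1) c2 (Tminus n k i c3 (Tminus n k (i + 1) c1 m)) x"
  proof (cases "x \<in> Eset n k")
    case False
    then show ?thesis by (simp add: Tminus_def Tact_outside)
  next
    case True
    obtain xs a b c ys where x: "x = xs @ a # b # c # ys" "length xs = i - 1"
      by (rule split_at_window3[of "i - 1" x]) (use i True in \<open>auto simp: Eset_length\<close>)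
    have i1: "i = Suc (length xs)" and i2: "i + 1 = Suc (Suc (length xs))" using x i by auto
    define w where "w = inverse V"
    have vw: "V * w = 1" by (simp add: w_def)
    from rel have rel': "c3 * (c1 + c2 - (V - w)) = c1 * c2" by (simp add: w_def)
    txt \<open>The two constant windows are identities without hypotheses, where \<open>algebra\<close> fails if given any.\<close>
    from True show ?thesis unfolding x(1) Tminus_def
      by (simp only: Tact_at[OF i1] Tact_at2[OF i2] flip: w_def)
        (induct a; induct b; induct c; simp add: Eset_def; thin_tac "_ \<and> _"; (algebra | use rel' vw in algebra))
  qed
qed

lemma Tminus_commute:
  assumes "1 \<le> i" "i + 2 \<le> j" "j + 1 \<le> n"
  shows "Tminus n k i c (Tminus n k j d m) = Tminus n k j d (Tminus n k i c m)"
proof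
  fix x
  show "Tminus n k i c (Tminus n k j d m) x = Tminus n k j d (Tminus n k i c m) x"
  proof (cases "x \<in> Eset n k")
    case False
    then show ?thesis by (simp add: Tminus_def Tact_outside algebra_simps)
  next
    case True
    obtain xs a b zs a' b' ys where x: "x = xs @ a # b # zs @ a' # b' # ys"
        "length xs = i - 1" "length zs = j - i - 2"
      by (rule split_at_two_windows[of "i - 1" "j - 1" x]) (use assms True in \<open>auto simp: Eset_length\<close>)
    have i1: "i = Suc (length xs)" and j1: "j = length xs + length zs + 3" using x assms by auto
    from True show ?thesis unfolding x(1) Tminus_def
      by (simp only: Tact_at[OF i1] Tact_at_far[OF j1])
        (induct a; induct b; induct a'; induct b'; simp add: Eset_def algebra_simps)
  qed
qed

section \<open>Braid families and the longest element\<close>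

locale braid_family =
  fixes G :: "nat \<Rightarrow> 'a \<Rightarrow> 'a" and N :: nat
  assumes braid: "1 \<le> i \<Longrightarrow> i + 1 \<le> N \<Longrightarrow> G i (G (i + 1) (G i u)) = G (i + 1) (G i (G (i + 1) u))"
    and far_commute: "1 \<le> i \<Longrightarrow> i + 2 \<le> j \<Longrightarrow> j \<le> N \<Longrightarrow> G i (G j u) = G j (G i u)"
begin

text \<open>\<open>longest m = (G\<^sub>1 \<circ> \<dots> \<circ> G\<^sub>m) \<circ> (G\<^sub>1 \<circ> \<dots> \<circ> G\<^sub>m\<^sub>-\<^sub>1) \<circ> \<dots> \<circ> G\<^sub>1\<close> follows a reduced word of the
  longest element of \<open>S\<^sub>m\<^sub>+\<^sub>1\<close>.\<close>

fun prod_up :: "nat \<Rightarrow> 'a \<Rightarrow> 'a" where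
  "prod_up 0 u = u"
| "prod_up (Suc m) u = prod_up m (G (Suc m) u)"

fun prod_down :: "nat \<Rightarrow> 'a \<Rightarrow> 'a" where
  "prod_down 0 u = u"
| "prod_down (Suc m) u = G (Suc m) (prod_down m u)"

fun longest :: "nat \<Rightarrow> 'a \<Rightarrow> 'a" where
  "longest 0 u = u"
| "longest (Suc m) u = prod_up (Suc m) (longest m u)"

lemma prod_up_commute: "m + 2 \<le> j \<Longrightarrow> j \<le> N \<Longrightarrow> G j (prod_up m u) = prod_up m (G j u)"
proof (induct m arbitrary: u)
  case (Suc m)
  then have "G j (G (Suc m) u) = G (Suc m) (G j u)" by (intro far_commute[symmetric]) auto
  with Suc show ?case by simp
qed simp

lemma prod_down_commute: "m + 2 \<le> j \<Longrightarrow> j \<le> N \<Longrightarrow> G j (prod_down m u) = prod_down m (G j u)"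
proof (induct m arbitrary: u)
  case (Suc m)
  then have "G j (G (Suc m) (prod_down m u)) = G (Suc m) (G j (prod_down m u))"
    by (intro far_commute[symmetric]) auto
  with Suc show ?case by simp
qed simp

lemma longest_commute: "m + 2 \<le> j \<Longrightarrow> j \<le> N \<Longrightarrow> G j (longest m u) = longest m (G j u)"
proof (induct m arbitrary: u)
  case (Suc m)
  then have "G j (prod_up (Suc m) (longest m u)) = prod_up (Suc m) (G j (longest m u))"
    by (intro prod_up_commute) auto
  with Suc show ?case by simp
qed simp

lemma prod_down_conj: "2 \<le> i \<Longrightarrow> i \<le> m \<Longrightarrow> m \<le> N \<Longrightarrow> prod_down m (G i u) = G (i - 1) (prod_down m u)"
proof (induct m arbitrary: u)
  case (Suc m)
  show ?case
  proof (cases "i \<le> m")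
    case True
    with Suc have "prod_down (Suc m) (G i u) = G (Suc m) (G (i - 1) (prod_down m u))" by simp
    also have "\<dots> = G (i - 1) (G (Suc m) (prod_down m u))"
      using Suc True by (intro far_commute[symmetric]) auto
    finally show ?thesis by simp
  next
    case False
    with Suc obtain m' where i: "i = Suc m" and m: "m = Suc m'" by (cases m) auto
    have "prod_down (Suc m) (G i u) = G (Suc m) (G m (prod_down m' (G (Suc m) u)))" using i m by simp
    also have "prod_down m' (G (Suc m) u) = G (Suc m) (prod_down m' u)"
      using prod_down_commute[of m' "Suc m" u] m Suc by simp
    also have "G (Suc m) (G m (G (Suc m) (prod_down m' u))) = G m (G (Suc m) (G m (prod_down m' u)))"
      using braid[of m "prod_down m' u"] m Suc by simp
    finally show ?thesis using i m by simp
  qed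
qed simp

lemma prod_up_conj: "1 \<le> i \<Longrightarrow> i + 1 \<le> m \<Longrightarrow> m \<le> N \<Longrightarrow> prod_up m (G i u) = G (i + 1) (prod_up m u)"
proof (induct m arbitrary: u)
  case (Suc m)
  show ?case
  proof (cases "i + 1 \<le> m")
    case True
    have "prod_up (Suc m) (G i u) = prod_up m (G (Suc m) (G i u))" by simp
    also have "G (Suc m) (G i u) = G i (G (Suc m) u)" using Suc True by (intro far_commute[symmetric]) auto
    also have "prod_up m (G i (G (Suc m) u)) = G (i + 1) (prod_up m (G (Suc m) u))" using Suc True by simp
    finally show ?thesis by simp
  next
    case False
    with Suc obtain m' where i: "i = m" and m: "m = Suc m'" by (cases m) auto
    have "prod_up (Suc m) (G i u) = prod_up m' (G m (G (Suc m) (G m u)))" using i m by simp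
    also have "G m (G (Suc m) (G m u)) = G (Suc m) (G m (G (Suc m) u))" using braid[of m u] m Suc by simp
    also have "prod_up m' (G (Suc m) (G m (G (Suc m) u))) = G (Suc m) (prod_up m' (G m (G (Suc m) u)))"
      using prod_up_commute[of m' "Suc m"] m Suc by simp
    finally show ?thesis using i m by simp
  qed
qed simp

lemma longest_prod_down: "1 \<le> m \<Longrightarrow> m \<le> N \<Longrightarrow> longest m u = longest (m - 1) (prod_down m u)"
proof (induct m arbitrary: u)
  case (Suc m)
  show ?case
  proof (cases m)
    case (Suc m')
    have "longest (Suc m) u = prod_up m (G (Suc m) (longest m u))" by simp
    also have "longest m u = longest m' (prod_down m u)" using Suc.hyps Suc.prems \<open>m = Suc m'\<close> by simp
    also have "G (Suc m) (longest m' (prod_down m u)) = longest m' (G (Suc m) (prod_down m u))"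
      using longest_commute[of m' "Suc m"] Suc.prems \<open>m = Suc m'\<close> by simp
    finally show ?thesis using \<open>m = Suc m'\<close> by simp
  qed simp
qed simp

lemma longest_conj: "1 \<le> i \<Longrightarrow> i \<le> m \<Longrightarrow> m \<le> N \<Longrightarrow> longest m (G i u) = G (m + 1 - i) (longest m u)"
proof (induct m arbitrary: i u)
  case (Suc m)
  show ?case
  proof (cases "i = 1")
    case True
    show ?thesis
    proof (cases "m = 0")
      case False
      have "longest (Suc m) (G 1 u) = prod_up (Suc m) (longest m (G 1 u))" by simp
      also have "longest m (G 1 u) = G m (longest m u)" using Suc False by simp
      also have "prod_up (Suc m) (G m (longest m u)) = G (Suc m) (prod_up (Suc m) (longest m u))"
        using prod_up_conj[of m "Suc m"] Suc False by simp
      finally show ?thesis using True by simp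
    qed (use True in simp)
  next
    case False
    have "longest (Suc m) (G i u) = longest m (prod_down (Suc m) (G i u))"
      using longest_prod_down[of "Suc m"] Suc by simp
    also have "prod_down (Suc m) (G i u) = G (i - 1) (prod_down (Suc m) u)"
      using prod_down_conj[of i "Suc m"] Suc False by simp
    also have "longest m (G (i - 1) (prod_down (Suc m) u)) = G (m + 1 - (i - 1)) (longest m (prod_down (Suc m) u))"
      using Suc False by simp
    also have "longest m (prod_down (Suc m) u) = longest (Suc m) u"
      using longest_prod_down[of "Suc m"] Suc by simp
    finally show ?thesis using Suc False by simp
  qed
qed simp

end

locale linear_braid_family = braid_family G N
  for G :: "nat \<Rightarrow> ('x \<Rightarrow> 'r::comm_ring_1) \<Rightarrow> 'x \<Rightarrow> 'r" and N +
  assumes linear: "G i (\<lambda>x. a x + c * b x) = (\<lambda>x. G i a x + c * G i b x)"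
begin

lemma G_zero: "G i (\<lambda>x. 0) = (\<lambda>x. 0)"
  using linear[of i "\<lambda>x. 0" "-1" "\<lambda>x. 0"] by (simp add: fun_eq_iff)

lemma prod_up_linear: "prod_up m (\<lambda>x. a x + c * b x) = (\<lambda>x. prod_up m a x + c * prod_up m b x)"
  by (induct m arbitrary: a b) (simp_all add: linear)

lemma longest_linear: "longest m (\<lambda>x. a x + c * b x) = (\<lambda>x. longest m a x + c * longest m b x)"
  by (induct m arbitrary: a b) (simp_all add: prod_up_linear)

lemma prod_up_zero: "prod_up m (\<lambda>x. 0) = (\<lambda>x. 0)"
  by (induct m) (simp_all add: G_zero)

lemma prod_up_scale: "prod_up m (\<lambda>x. c * b x) = (\<lambda>x. c * prod_up m b x)"
  using prod_up_linear[of m "\<lambda>x. 0" c b] by (simp add: prod_up_zero)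

lemma longest_zero: "longest m (\<lambda>x. 0) = (\<lambda>x. 0)"
  using longest_linear[of m "\<lambda>x. 0" "-1" "\<lambda>x. 0"] by (simp add: fun_eq_iff)

end

interpretation Tinv: linear_braid_family "\<lambda>i. Tminus n k i vdiff" "n - 1" for n k
proof
  fix i u assume "1 \<le> i" "i + 1 \<le> n - 1"
  then show "Tminus n k i vdiff (Tminus n k (i + 1) vdiff (Tminus n k i vdiff u))
      = Tminus n k (i + 1) vdiff (Tminus n k i vdiff (Tminus n k (i + 1) vdiff u))"
    by (intro Tminus_YBE) auto
next
  fix i j u assume "1 \<le> i" "i + 2 \<le> j" "j \<le> n - 1"
  then show "Tminus n k i vdiff (Tminus n k j vdiff u) = Tminus n k j vdiff (Tminus n k i vdiff u)"
    by (intro Tminus_commute) auto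
qed (rule Tminus_linear)

section \<open>An explicit bar involution on M\<close>

text \<open>\<open>rev_bar\<close> reverses sign sequences and bars coefficients; it intertwines \<open>T\<^sub>i\<close> with
  \<open>T\<^sub>n\<^sub>-\<^sub>i\<^sup>-\<^sup>1\<close>. Composing with \<open>T\<^sub>w\<^sub>0\<^sup>-\<^sup>1\<close> undoes the index flip \<open>i \<mapsto> n - i\<close>, so \<open>bar_raw\<close>
  intertwines \<open>T\<^sub>i\<close> with \<open>T\<^sub>i\<^sup>-\<^sup>1\<close>.\<close>

definition rev_bar :: "nat \<Rightarrow> nat \<Rightarrow> modM \<Rightarrow> modM" where
  "rev_bar n k m = (\<lambda>x. if x \<in> Eset n k then barQ (m (rev x)) else 0)"

definition bar_raw :: "nat \<Rightarrow> nat \<Rightarrow> modM \<Rightarrow> modM" where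
  "bar_raw n k m = braid_family.longest (\<lambda>i. Tminus n k i vdiff) (n - 1) (rev_bar n k m)"

lemma rev_in_Eset [simp]: "rev x \<in> Eset n k \<longleftrightarrow> x \<in> Eset n k"
  by (simp add: Eset_def rev_filter[symmetric])

lemma rev_bar_linear: "rev_bar n k (\<lambda>x. a x + c * b x) = (\<lambda>x. rev_bar n k a x + barQ c * rev_bar n k b x)"
  by (rule ext) (simp add: rev_bar_def barQ_add barQ_mult)

lemma rev_bar_Tact:
  assumes "1 \<le> i" "i + 1 \<le> n"
  shows "rev_bar n k (Tact n k i m) = Tminus n k (n - i) vdiff (rev_bar n k m)"
proof
  fix x
  show "rev_bar n k (Tact n k i m) x = Tminus n k (n - i) vdiff (rev_bar n k m) x"
  proof (cases "x \<in> Eset n k")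
    case False
    then show ?thesis by (simp add: rev_bar_def Tminus_def Tact_outside)
  next
    case True
    obtain xs a b ys where x: "x = xs @ a # b # ys" "length xs = n - i - 1"
      by (rule split_at_window[of "n - i - 1" x]) (use assms True in \<open>auto simp: Eset_length\<close>)
    have "length ys = i - 1" using x assms Eset_length[OF True] by auto
    with x assms have i1: "n - i = Suc (length xs)" and i2: "i = Suc (length (rev ys))" by auto
    from True show ?thesis unfolding x(1) rev_bar_def Tminus_def
      by (cases a; cases b)
        (simp_all add: Tact_at[OF i1] Tact_at[OF i2] Eset_def barQ_simps algebra_simps flip: rev_filter)
  qed
qed

lemma rev_bar_Tinv:
  assumes "1 \<le> i" "i + 1 \<le> n"
  shows "rev_bar n k (Tminus n k i vdiff m) = Tact n k (n - i) (rev_bar n k m)"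
proof -
  have "Tminus n k i vdiff m = (\<lambda>x. Tact n k i m x + (- vdiff) * m x)"
    by (simp add: Tminus_def algebra_simps)
  then have "rev_bar n k (Tminus n k i vdiff m)
      = (\<lambda>x. Tminus n k (n - i) vdiff (rev_bar n k m) x + vdiff * rev_bar n k m x)"
    by (simp add: rev_bar_linear rev_bar_Tact[OF assms] barQ_simps)
  then show ?thesis by (simp add: Tminus_def)
qed

lemma bar_raw_linear: "bar_raw n k (\<lambda>x. a x + c * b x) = (\<lambda>x. bar_raw n k a x + barQ c * bar_raw n k b x)"
  by (simp add: bar_raw_def rev_bar_linear Tinv.longest_linear)

lemma bar_raw_Tact:
  assumes "1 \<le> i" "i \<le> n - 1"
  shows "bar_raw n k (Tact n k i m) = Tminus n k i vdiff (bar_raw n k m)"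
  using assms by (simp add: bar_raw_def rev_bar_Tact Tinv.longest_conj)

lemma bar_raw_Tinv:
  assumes "1 \<le> i" "i \<le> n - 1"
  shows "bar_raw n k (Tminus n k i vdiff m) = Tact n k i (bar_raw n k m)"
proof -
  let ?u = "rev_bar n k m"
  have "bar_raw n k (Tminus n k i vdiff m) = Tinv.longest n k (n - 1) (Tact n k (n - i) ?u)"
    using assms by (simp add: bar_raw_def rev_bar_Tinv)
  also have "\<dots> = (\<lambda>x. Tinv.longest n k (n - 1) (Tminus n k (n - i) vdiff ?u) x
                      + vdiff * Tinv.longest n k (n - 1) ?u x)"
    by (simp only: Tact_eq_Tminus[where c = vdiff] Tinv.longest_linear)
  also have "Tinv.longest n k (n - 1) (Tminus n k (n - i) vdiff ?u) = Tminus n k i vdiff (Tinv.longest n k (n - 1) ?u)"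
    using assms Tinv.longest_conj[of "n - i" "n - 1" n k ?u] by simp
  finally show ?thesis by (simp only: Tact_eq_Tminus[where c = vdiff] bar_raw_def[symmetric])
qed

lemma Tinv_prod_up_move_plus:
  "replicate c True @ replicate a False @ True # rest \<in> Eset n k \<Longrightarrow>
   Tinv.prod_up n k (c + a) (basis (replicate c True @ replicate a False @ True # rest))
     = Tinv.prod_up n k c (basis (replicate c True @ True # replicate a False @ rest))"
proof (induct a arbitrary: rest)
  case (Suc a)
  let ?xs = "replicate c True @ replicate a False"
  have split: "replicate c True @ replicate (Suc a) False @ True # rest = ?xs @ False # True # rest"
    by (simp only: replicate_Suc_append append_assoc)
  have "?xs @ True # False # rest \<in> Eset n k"
    using Suc.prems unfolding split by (simp add: Eset_def)
  then have IH: "Tinv.prod_up n k (c + a) (basis (?xs @ True # False # rest))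
      = Tinv.prod_up n k c (basis (replicate c True @ True # replicate a False @ False # rest))"
    using Suc.hyps by simp
  have "Tinv.prod_up n k (c + Suc a) (basis (?xs @ False # True # rest))
      = Tinv.prod_up n k (c + a) (Tminus n k (Suc (length ?xs)) vdiff (basis (?xs @ False # True # rest)))"
    by simp
  also have "\<dots> = Tinv.prod_up n k (c + a) (basis (?xs @ True # False # rest))"
    using Suc.prems unfolding split by (simp only: Tinv_basis_FT)
  finally show ?case unfolding split IH by (simp add: replicate_app_Cons_same)
qed simp

lemma Tinv_prod_up_constant:
  "replicate (Suc c) b @ r \<in> Eset n k \<Longrightarrow>
   Tinv.prod_up n k c (basis (replicate (Suc c) b @ r)) = (\<lambda>x. (- V) ^ c * basis (replicate (Suc c) b @ r) x)"
proof (induct c arbitrary: r)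
  case (Suc c)
  have split: "replicate (Suc (Suc c)) b @ r = replicate c b @ b # b # r"
    and split': "replicate c b @ b # b # r = replicate (Suc c) b @ (b # r)"
    by (simp_all only: replicate_Suc_append)
  have "Tinv.prod_up n k (Suc c) (basis (replicate c b @ b # b # r))
      = Tinv.prod_up n k c (Tminus n k (Suc (length (replicate c b))) vdiff (basis (replicate c b @ b # b # r)))"
    by simp
  also have "Tminus n k (Suc (length (replicate c b))) vdiff (basis (replicate c b @ b # b # r))
      = (\<lambda>x. (- V) * basis (replicate c b @ b # b # r) x)"
    using Tminus_basis_equal[of "replicate c b" b r n k vdiff] Suc.prems unfolding split by simp
  also have "Tinv.prod_up n k c (\<lambda>x. (- V) * basis (replicate c b @ b # b # r) x)
      = (\<lambda>x. (- V) ^ Suc c * basis (replicate c b @ b # b # r) x)"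
  proof -
    have "Tinv.prod_up n k c (basis (replicate (Suc c) b @ b # r))
        = (\<lambda>x. (- V) ^ c * basis (replicate (Suc c) b @ b # r) x)"
      using Suc.hyps[of "b # r"] Suc.prems unfolding split split' by blast
    then show ?thesis by (simp only: Tinv.prod_up_scale split' power_Suc mult.assoc)
  qed
  finally show ?case unfolding split .
qed simp

lemma Tinv_longest_constant:
  "replicate (Suc m) b @ r \<in> Eset n k \<Longrightarrow>
   \<exists>e. Tinv.longest n k m (basis (replicate (Suc m) b @ r)) = (\<lambda>x. (- V) ^ e * basis (replicate (Suc m) b @ r) x)"
proof (induct m arbitrary: r)
  case (Suc m)
  have split: "replicate (Suc (Suc m)) b @ r = replicate (Suc m) b @ b # r"
    by (simp only: replicate_Suc_append)
  obtain e where e: "Tinv.longest n k m (basis (replicate (Suc m) b @ b # r))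
      = (\<lambda>x. (- V) ^ e * basis (replicate (Suc m) b @ b # r) x)"
    using Suc.hyps[of "b # r"] Suc.prems unfolding split by blast
  have "Tinv.longest n k (Suc m) (basis (replicate (Suc (Suc m)) b @ r))
      = (\<lambda>x. (- V) ^ e * Tinv.prod_up n k (Suc m) (basis (replicate (Suc (Suc m)) b @ r)) x)"
    unfolding Tinv.longest.simps(2) split e by (rule Tinv.prod_up_scale)
  also have "\<dots> = (\<lambda>x. (- V) ^ (e + Suc m) * basis (replicate (Suc (Suc m)) b @ r) x)"
    using Tinv_prod_up_constant[OF Suc.prems] by (simp add: power_add mult_ac)
  finally show ?case by blast
qed (intro exI[of _ 0], simp)

lemma Tinv_longest_sort:
  "a + b = Suc m \<Longrightarrow> replicate a False @ replicate b True @ rest \<in> Eset n k \<Longrightarrow>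
   \<exists>e. Tinv.longest n k m (basis (replicate a False @ replicate b True @ rest))
        = (\<lambda>x. (- V) ^ e * basis (replicate b True @ replicate a False @ rest) x)"
proof (induct m arbitrary: a b rest)
  case 0
  then have "replicate a False @ replicate b True = replicate b True @ replicate a False"
    by (cases a; cases b) auto
  then show ?case by (intro exI[of _ 0]) (simp flip: append_assoc)
next
  case (Suc m)
  show ?case
  proof (cases b)
    case 0
    with Suc.prems show ?thesis using Tinv_longest_constant[of "Suc m" False rest n k] by simp
  next
    case (Suc b')
    have split: "replicate a False @ replicate b True @ rest = replicate a False @ replicate b' True @ True # rest"
      unfolding Suc by (simp only: replicate_Suc_append)
    have "replicate a False @ replicate b' True @ True # rest \<in> Eset n k"
      using Suc.prems(2) unfolding split .
    then obtain e where e: "Tinv.longest n k m (basis (replicate a False @ replicate b' True @ True # rest))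
        = (\<lambda>x. (- V) ^ e * basis (replicate b' True @ replicate a False @ True # rest) x)"
      using Suc.hyps[of a b' "True # rest"] Suc.prems(1) \<open>b = Suc b'\<close> by auto
    have mem: "replicate b' True @ replicate a False @ True # rest \<in> Eset n k"
      and mem': "replicate (Suc b') True @ replicate a False @ rest \<in> Eset n k"
      using Suc.prems \<open>b = Suc b'\<close> by (simp_all add: Eset_def)
    have "Suc m = b' + a" using Suc.prems \<open>b = Suc b'\<close> by simp
    then have "Tinv.longest n k (Suc m) (basis (replicate a False @ replicate b True @ rest))
        = Tinv.prod_up n k (b' + a) (\<lambda>x. (- V) ^ e * basis (replicate b' True @ replicate a False @ True # rest) x)"
      unfolding Tinv.longest.simps(2) split e by simp_all
    also have "\<dots> = (\<lambda>x. (- V) ^ e * Tinv.prod_up n k b' (basis (replicate (Suc b') True @ replicate a False @ rest)) x)"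
      by (simp add: Tinv.prod_up_scale Tinv_prod_up_move_plus[OF mem] replicate_app_Cons_same)
    also have "\<dots> = (\<lambda>x. (- V) ^ (e + b') * basis (replicate b True @ replicate a False @ rest) x)"
      using Tinv_prod_up_constant[OF mem'] by (simp add: \<open>b = Suc b'\<close> power_add mult.assoc)
    finally show ?thesis by blast
  qed
qed

definition low_seq :: "nat \<Rightarrow> nat \<Rightarrow> bool list" where
  "low_seq n k = replicate (n - k) False @ replicate k True"

lemma one_seq_in_Eset: "k \<le> n \<Longrightarrow> one_seq n k \<in> Eset n k"
  by (simp add: one_seq_def Eset_def)

lemma low_seq_in_Eset: "k \<le> n \<Longrightarrow> low_seq n k \<in> Eset n k"
  by (simp add: low_seq_def Eset_def)

lemma rev_bar_basis: "e \<in> Eset n k \<Longrightarrow> rev_bar n k (basis e) = basis (rev e)"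
  by (rule ext) (auto simp: rev_bar_def basis_def rev_swap)

lemma bar_raw_one:
  assumes "1 \<le> n" "k \<le> n"
  shows "\<exists>c. c \<noteq> 0 \<and> bar_raw n k (basis (one_seq n k)) = (\<lambda>x. c * basis (one_seq n k) x)"
proof -
  have "bar_raw n k (basis (one_seq n k)) = Tinv.longest n k (n - 1) (basis (rev (one_seq n k)))"
    using assms by (simp add: bar_raw_def rev_bar_basis one_seq_in_Eset)
  moreover have "rev (one_seq n k) = replicate (n - k) False @ replicate k True @ []"
    by (simp add: one_seq_def)
  moreover obtain e where "Tinv.longest n k (n - 1) (basis (replicate (n - k) False @ replicate k True @ []))
      = (\<lambda>x. (- V) ^ e * basis (replicate k True @ replicate (n - k) False @ []) x)"
    using Tinv_longest_sort[of "n - k" k "n - 1" "[]" n k] assms by (auto simp: Eset_def)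
  ultimately show ?thesis
    by (intro exI[of _ "(- V) ^ e"]) (simp add: one_seq_def)
qed

text \<open>\<open>bar_raw\<close> sends \<open>\<one>\<close> to a nonzero multiple of itself; \<open>bar_op\<close> divides by that scalar, so that it
  fixes \<open>\<one>\<close>.\<close>

definition bar_const :: "nat \<Rightarrow> nat \<Rightarrow> qv" where
  "bar_const n k = bar_raw n k (basis (one_seq n k)) (one_seq n k)"

definition bar_op :: "nat \<Rightarrow> nat \<Rightarrow> modM \<Rightarrow> modM" where
  "bar_op n k m = (\<lambda>x. inverse (bar_const n k) * bar_raw n k m x)"

lemma bar_op_one:
  assumes "1 \<le> n" "k \<le> n"
  shows "bar_op n k (basis (one_seq n k)) = basis (one_seq n k)"
proof -
  obtain c where "c \<noteq> 0" "bar_raw n k (basis (one_seq n k)) = (\<lambda>x. c * basis (one_seq n k) x)"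
    using bar_raw_one[OF assms] by blast
  then show ?thesis by (simp add: bar_op_def bar_const_def basis_def fun_eq_iff)
qed

lemma bar_op_linear: "bar_op n k (\<lambda>x. a x + c * b x) = (\<lambda>x. bar_op n k a x + barQ c * bar_op n k b x)"
  by (simp add: bar_op_def bar_raw_linear algebra_simps)

lemma bar_op_zero: "bar_op n k (\<lambda>x. 0) = (\<lambda>x. 0)"
proof -
  have "rev_bar n k (\<lambda>x. 0) = (\<lambda>x. 0)" using barQ_0 by (simp add: rev_bar_def fun_eq_iff)
  then show ?thesis by (simp add: bar_op_def bar_raw_def Tinv.longest_zero)
qed

lemma bar_op_scale: "bar_op n k (\<lambda>x. c * b x) = (\<lambda>x. barQ c * bar_op n k b x)"
  using bar_op_linear[of n k "\<lambda>x. 0" c b] by (simp add: bar_op_zero)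

lemma bar_op_add: "bar_op n k (\<lambda>x. a x + b x) = (\<lambda>x. bar_op n k a x + bar_op n k b x)"
  using bar_op_linear[of n k a 1 b] by simp

lemma bar_op_diff: "bar_op n k (\<lambda>x. a x - b x) = (\<lambda>x. bar_op n k a x - bar_op n k b x)"
  using bar_op_linear[of n k a "- 1" b] by (simp add: barQ_minus)

lemma inM_bar_op: "inM n k (bar_op n k m)"
proof -
  have "inM n k (Tinv.prod_up n k j u)" if "inM n k u" for j u
    using that by (induct j arbitrary: u) (simp_all add: inM_Tminus)
  then have "inM n k (Tinv.longest n k j u)" if "inM n k u" for j u
    using that by (induct j arbitrary: u) (simp_all del: Tinv.prod_up.simps)
  moreover have "inM n k (rev_bar n k m)" by (simp add: inM_def rev_bar_def)
  ultimately show ?thesis by (simp add: inM_def bar_op_def bar_raw_def)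
qed

lemma bar_op_Tact: "1 \<le> i \<Longrightarrow> i \<le> n - 1 \<Longrightarrow> bar_op n k (Tact n k i m) = Tminus n k i vdiff (bar_op n k m)"
  by (simp add: bar_op_def bar_raw_Tact Tminus_scale)

lemma bar_op_Tinv: "1 \<le> i \<Longrightarrow> i \<le> n - 1 \<Longrightarrow> bar_op n k (Tminus n k i vdiff m) = Tact n k i (bar_op n k m)"
  by (simp add: bar_op_def bar_raw_Tinv Tact_scale)

lemma bar_op_hact: "valid_h n h \<Longrightarrow> hact n k (barH h) (bar_op n k m) = bar_op n k (hact n k h m)"
proof (induct h arbitrary: m)
  case (HT i)
  then show ?case using bar_op_Tact[of i n k m] by (simp add: valid_h_def Tminus_def)
next
  case (HTinv i)
  then show ?case using bar_op_Tinv[of i n k m] by (simp add: valid_h_def Tminus_def)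
qed (simp_all add: valid_h_def bar_op_scale bar_op_add)

section \<open>Weight, cyclicity and triangularity\<close>

text \<open>\<open>weight x\<close> is the sum of the (0-based) positions of the pluses of \<open>x\<close>; on \<open>E\<close> it is the
  length of the corresponding element of \<open>W\<^sup>J\<close> plus a constant.\<close>

fun weight :: "bool list \<Rightarrow> nat" where
  "weight [] = 0"
| "weight (b # xs) = weight xs + length (filter id xs)"

lemma weight_append: "weight (xs @ ys) = weight xs + weight ys + length xs * length (filter id ys)"
  by (induct xs) (auto simp: id_def)

lemma weight_FT: "weight (xs @ False # True # ys) = Suc (weight (xs @ True # False # ys))"
  by (simp add: weight_append)

lemma weight_le:
  "weight x \<le> weight (replicate (length (filter id x)) True)
     + (length x - length (filter id x)) * length (filter id x)"
proof (induct x)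
  case (Cons b x)
  define c where "c = length (filter id x)"
  have "c \<le> length x" unfolding c_def by (rule length_filter_le)
  have IH: "weight x \<le> weight (replicate c True) + (length x - c) * c" using Cons by (simp only: c_def)
  have w: "weight (b # x) = weight x + c" by (simp add: c_def)
  show ?case
  proof (cases b)
    case True
    then have 1: "length (filter id (b # x)) = Suc c" and 2: "length (b # x) - Suc c = length x - c"
      by (simp_all add: c_def)
    from IH show ?thesis unfolding 1 2 w by simp
  next
    case False
    then have 1: "length (filter id (b # x)) = c" and 2: "length (b # x) - c = Suc (length x - c)"
      using \<open>c \<le> length x\<close> by (simp_all add: c_def Suc_diff_le)
    from IH show ?thesis unfolding 1 2 w by simp
  qed
qed simp

lemma weight_low_seq_max: "x \<in> Eset n k \<Longrightarrow> weight x \<le> weight (low_seq n k)"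
  using weight_le[of x] by (simp add: Eset_def low_seq_def weight_append)

lemma swp_window [simp]: "swp (Suc (length xs)) (xs @ a # b # ys) = xs @ b # a # ys"
  by (simp add: swp_def nth_append list_update_append)

lemma swp_swp:
  assumes "1 \<le> i" "i < length x"
  shows "swp i (swp i x) = x"
proof -
  obtain xs a b ys where "x = xs @ a # b # ys" "length xs = i - 1"
    by (rule split_at_window[of "i - 1" x]) (use assms in auto)
  with assms show ?thesis by (metis Suc_pred' less_le_trans swp_window zero_less_one)
qed

lemma weight_swp_le:
  assumes "1 \<le> i" "i < length x"
  shows "weight x \<le> Suc (weight (swp i x))"
proof -
  obtain xs a b ys where x: "x = xs @ a # b # ys" "length xs = i - 1"
    by (rule split_at_window[of "i - 1" x]) (use assms in auto)
  then have "swp i x = xs @ b # a # ys" using assms by (metis Suc_pred' less_le_trans swp_window zero_less_one)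
  with x show ?thesis by (cases a; cases b) (simp_all add: weight_append)
qed

lemma sorted_if_no_FT:
  "\<nexists>xs ys. e = xs @ False # True # ys \<Longrightarrow>
   e = replicate (length (filter id e)) True @ replicate (length e - length (filter id e)) False"
proof (induct e)
  case (Cons b e)
  then have "\<nexists>xs ys. e = xs @ False # True # ys" by (metis append_Cons)
  with Cons.hyps obtain p q where e: "e = replicate p True @ replicate q False" by blast
  show ?case
  proof (cases "b \<or> p = 0")
    case True
    with e show ?thesis by (cases b) (simp_all add: filter_replicate)
  next
    case False
    then obtain p' where "p = Suc p'" "\<not> b" by (cases p) auto
    with e have "b # e = [] @ False # True # replicate p' True @ replicate q False" by simp
    with Cons.prems show ?thesis by blast
  qed
qed simp

lemma sorted_if_no_TF:
  "\<nexists>xs ys. e = xs @ True # False # ys \<Longrightarrow>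
   e = replicate (length e - length (filter id e)) False @ replicate (length (filter id e)) True"
proof (induct e)
  case (Cons b e)
  then have "\<nexists>xs ys. e = xs @ True # False # ys" by (metis append_Cons)
  with Cons.hyps obtain p q where e: "e = replicate q False @ replicate p True" by blast
  show ?case
  proof (cases "\<not> b \<or> q = 0")
    case True
    with e show ?thesis by (cases b) (simp_all add: filter_replicate replicate_append_same)
  next
    case False
    then obtain q' where "q = Suc q'" "b" by (cases q) auto
    with e have "b # e = [] @ True # False # replicate q' False @ replicate p True" by simp
    with Cons.prems show ?thesis by blast
  qed
qed simp

lemma find_FT: "e \<in> Eset n k \<Longrightarrow> e \<noteq> one_seq n k \<Longrightarrow> \<exists>xs ys. e = xs @ False # True # ys"
  using sorted_if_no_FT[of e] by (auto simp: Eset_def one_seq_def)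

lemma find_TF: "e \<in> Eset n k \<Longrightarrow> e \<noteq> low_seq n k \<Longrightarrow> \<exists>xs ys. e = xs @ True # False # ys"
  using sorted_if_no_TF[of e] by (auto simp: Eset_def low_seq_def)

lemma Eset_FT_TF: "xs @ False # True # ys \<in> Eset n k \<longleftrightarrow> xs @ True # False # ys \<in> Eset n k"
  by (simp add: Eset_def)

lemma finite_Eset: "finite (Eset n k)"
proof -
  have "Eset n k \<subseteq> {xs. set xs \<subseteq> UNIV \<and> length xs = n}" by (auto simp: Eset_def)
  moreover have "finite {xs. set xs \<subseteq> (UNIV :: bool set) \<and> length xs = n}"
    by (rule finite_lists_length_eq) simp
  ultimately show ?thesis by (rule finite_subset)
qed

lemma basis_generated:
  assumes "k \<le> n"
  shows "e \<in> Eset n k \<Longrightarrow> \<exists>h. valid_h n h \<and> hact n k h (basis (one_seq n k)) = basis e"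
proof (induction "weight e" arbitrary: e rule: less_induct)
  case less
  show ?case
  proof (cases "e = one_seq n k")
    case True
    then show ?thesis by (intro exI[of _ "HScal 1"]) (simp add: valid_h_def)
  next
    case False
    then obtain xs ys where e: "e = xs @ False # True # ys" using find_FT less.prems by blast
    let ?e' = "xs @ True # False # ys"
    have e': "?e' \<in> Eset n k" using less.prems e Eset_FT_TF by simp
    then obtain h where h: "valid_h n h" "hact n k h (basis (one_seq n k)) = basis ?e'"
      using less.hyps e weight_FT by fastforce
    have "Suc (length xs) \<le> n - 1" using Eset_length[OF less.prems] e by simp
    with h e' e show ?thesis
      by (intro exI[of _ "HMul (HT (Suc (length xs))) h"]) (simp add: valid_h_def Tact_basis_TF)
  qed
qed

lemma inM_eq_sum: "inM n k u \<Longrightarrow> u = (\<lambda>x. \<Sum>y\<in>Eset n k. u y * basis y x)"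
  by (rule ext) (simp add: basis_def inM_def finite_Eset if_distrib cong: if_cong)

lemma M_cyclic:
  assumes "k \<le> n" "inM n k u"
  shows "\<exists>h. valid_h n h \<and> hact n k h (basis (one_seq n k)) = u"
proof -
  have "finite S \<Longrightarrow> S \<subseteq> Eset n k \<Longrightarrow>
      \<exists>h. valid_h n h \<and> hact n k h (basis (one_seq n k)) = (\<lambda>x. \<Sum>y\<in>S. u y * basis y x)" for S
  proof (induct S rule: finite_induct)
    case empty
    show ?case by (intro exI[of _ "HScal 0"]) (simp add: valid_h_def)
  next
    case (insert e S)
    then obtain h he where "valid_h n h" "hact n k h (basis (one_seq n k)) = (\<lambda>x. \<Sum>y\<in>S. u y * basis y x)"
      and "valid_h n he" "hact n k he (basis (one_seq n k)) = basis e"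
      using basis_generated[OF assms(1)] by blast
    with insert show ?case
      by (intro exI[of _ "HAdd (HMul (HScal (u e)) he) h"]) (simp add: valid_h_def)
  qed
  from this[OF finite_Eset subset_refl] show ?thesis
    by (simp flip: inM_eq_sum[OF assms(2)])
qed

lemma barM_eq_bar_op:
  assumes "1 \<le> n" "k \<le> n" "inM n k u"
  shows "barM n k u = bar_op n k u"
  unfolding barM_def
proof (rule some_equality)
  have bar_hact: "hact n k (barH h) (basis (one_seq n k)) = bar_op n k (hact n k h (basis (one_seq n k)))"
    if "valid_h n h" for h
    using bar_op_hact[OF that] bar_op_one[OF assms(1,2)] by metis
  obtain h where "valid_h n h" "hact n k h (basis (one_seq n k)) = u"
    using M_cyclic[OF assms(2,3)] by blast
  with bar_hact show "\<exists>h. valid_h n h \<and> hact n k h (basis (one_seq n k)) = u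
      \<and> bar_op n k u = hact n k (barH h) (basis (one_seq n k))"
    by metis
  show "y = bar_op n k u" if "\<exists>h. valid_h n h \<and> hact n k h (basis (one_seq n k)) = u
      \<and> y = hact n k (barH h) (basis (one_seq n k))" for y
    using that bar_hact by blast
qed

definition leading_term :: "modM \<Rightarrow> bool list \<Rightarrow> bool" where
  "leading_term u e \<longleftrightarrow> u e = 1 \<and> (\<forall>x. u x \<noteq> 0 \<longrightarrow> x = e \<or> weight x < weight e)"

lemma Tact_nonzero: "Tact n k i u x \<noteq> 0 \<Longrightarrow> u x \<noteq> 0 \<or> u (swp i x) \<noteq> 0"
  by (auto simp: Tact_def split: if_splits)

lemma leading_term_Tminus:
  assumes lt: "leading_term u (xs @ True # False # ys)" and mem: "xs @ True # False # ys \<in> Eset n k"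
  shows "leading_term (Tminus n k (Suc (length xs)) c u) (xs @ False # True # ys)"
proof -
  let ?e' = "xs @ True # False # ys" and ?e = "xs @ False # True # ys" and ?i = "Suc (length xs)"
  have w: "weight ?e = Suc (weight ?e')" by (rule weight_FT)
  have top: "u ?e' = 1" and supp: "\<And>x. u x \<noteq> 0 \<Longrightarrow> x = ?e' \<or> weight x < weight ?e'"
    using lt by (auto simp: leading_term_def)
  from supp[of ?e] w have "u ?e = 0" by auto
  with top mem have "Tminus n k ?i c u ?e = 1" by (simp add: Tminus_apply Tact_at Eset_def)
  moreover have "x = ?e \<or> weight x < weight ?e" if nz: "Tminus n k ?i c u x \<noteq> 0" for x
  proof (cases "x \<in> Eset n k \<and> u x = 0")
    case True
    then have "u (swp ?i x) \<noteq> 0" using nz Tact_nonzero by (force simp: Tminus_apply)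
    then have "swp ?i x = ?e' \<or> weight (swp ?i x) < weight ?e'" by (rule supp)
    moreover have i: "1 \<le> ?i" "?i < length x" using True mem by (simp_all add: Eset_def)
    ultimately show ?thesis using w weight_swp_le[OF i] swp_swp[OF i] by force
  next
    case False
    then have "u x \<noteq> 0" using nz by (auto simp: Tminus_apply Tact_outside)
    with supp w show ?thesis by force
  qed
  ultimately show ?thesis by (simp add: leading_term_def)
qed

lemma bar_op_basis_leading_term:
  assumes n: "1 \<le> n" "k \<le> n"
  shows "e \<in> Eset n k \<Longrightarrow> leading_term (bar_op n k (basis e)) e"
proof (induction "weight e" arbitrary: e rule: less_induct)
  case less
  show ?case
  proof (cases "e = one_seq n k")
    case True
    with bar_op_one[OF n] have "bar_op n k (basis e) = basis e" by simp
    then show ?thesis by (simp add: leading_term_def basis_def)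
  next
    case False
    then obtain xs ys where e: "e = xs @ False # True # ys" using find_FT less.prems by blast
    let ?e' = "xs @ True # False # ys"
    have e': "?e' \<in> Eset n k" using less.prems e Eset_FT_TF by simp
    have i: "1 \<le> Suc (length xs)" "Suc (length xs) \<le> n - 1" using Eset_length[OF less.prems] e by auto
    have "leading_term (bar_op n k (basis ?e')) ?e'" using less.hyps e' e weight_FT by simp
    then have "leading_term (Tminus n k (Suc (length xs)) vdiff (bar_op n k (basis ?e'))) e"
      using e e' by (simp add: leading_term_Tminus)
    then show ?thesis using e bar_op_Tact[OF i, of k "basis ?e'"] Tact_basis_TF[OF e'] by simp
  qed
qed

lemma bar_op_sum:
  "finite S \<Longrightarrow> bar_op n k (\<lambda>x. \<Sum>y\<in>S. f y * basis y x) = (\<lambda>x. \<Sum>y\<in>S. barQ (f y) * bar_op n k (basis y) x)"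
proof (induct S rule: finite_induct)
  case (insert e S)
  then have "(\<lambda>x. \<Sum>y\<in>insert e S. f y * basis y x) = (\<lambda>x. (\<Sum>y\<in>S. f y * basis y x) + f e * basis e x)"
    by (simp add: add.commute)
  then have "bar_op n k (\<lambda>x. \<Sum>y\<in>insert e S. f y * basis y x)
      = (\<lambda>x. bar_op n k (\<lambda>x. \<Sum>y\<in>S. f y * basis y x) x + barQ (f e) * bar_op n k (basis e) x)"
    by (simp only: bar_op_linear)
  with insert show ?case by (simp add: add.commute)
qed (simp add: bar_op_zero)

lemma bar_op_coeff_top:
  assumes n: "1 \<le> n" "k \<le> n" and u: "inM n k u" and x0: "x0 \<in> Eset n k"
    and top: "\<And>y. u y \<noteq> 0 \<Longrightarrow> weight y \<le> weight x0"
  shows "bar_op n k u x0 = barQ (u x0)"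
proof -
  have "bar_op n k u x0 = (\<Sum>y\<in>Eset n k. barQ (u y) * bar_op n k (basis y) x0)"
    using bar_op_sum[of "Eset n k" n k u] finite_Eset by (simp flip: inM_eq_sum[OF u])
  also have "\<dots> = barQ (u x0) * bar_op n k (basis x0) x0
      + (\<Sum>y\<in>Eset n k - {x0}. barQ (u y) * bar_op n k (basis y) x0)"
    by (rule sum.remove[OF finite_Eset x0])
  also have "(\<Sum>y\<in>Eset n k - {x0}. barQ (u y) * bar_op n k (basis y) x0) = 0"
  proof (rule sum.neutral, rule ballI)
    fix y assume y: "y \<in> Eset n k - {x0}"
    show "barQ (u y) * bar_op n k (basis y) x0 = 0"
    proof (cases "u y = 0")
      case False
      with top have "weight y \<le> weight x0" by blast
      with y bar_op_basis_leading_term[OF n, of y] have "bar_op n k (basis y) x0 = 0"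
        by (force simp: leading_term_def)
      then show ?thesis by simp
    qed simp
  qed
  also have "bar_op n k (basis x0) x0 = 1"
    using bar_op_basis_leading_term[OF n x0] by (simp add: leading_term_def)
  finally show ?thesis by simp
qed

section \<open>The sign vector is the parabolic KL basis element\<close>

lemma vZv_0: "0 \<in> vZv"
  unfolding vZv_def by (rule CollectI, rule exI[of _ 0]) (simp add: Zero_fract_def)

lemma vZv_diff: "a \<in> vZv \<Longrightarrow> b \<in> vZv \<Longrightarrow> a - b \<in> vZv"
proof -
  assume "a \<in> vZv" "b \<in> vZv"
  then obtain p q where "a = Fract p 1" "b = Fract q 1" "\<forall>i. coeff p i \<in> \<int>" "\<forall>i. coeff q i \<in> \<int>"
    "coeff p 0 = 0" "coeff q 0 = 0"
    unfolding vZv_def by blast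
  then show "a - b \<in> vZv" unfolding vZv_def by (auto intro!: exI[of _ "p - q"] Ints_diff)
qed

lemma vZv_power: "1 \<le> e \<Longrightarrow> (- V) ^ e \<in> vZv"
proof -
  assume "1 \<le> e"
  have "- V = fract_of_poly (monom (- 1) 1)"
    by (simp add: V_eq monom_Suc monom_0 flip: fract_of_poly_minus)
  then have "(- V) ^ e = fract_of_poly (monom ((- 1) ^ e) e)"
    by (simp add: monom_power flip: fract_of_poly_power)
  with \<open>1 \<le> e\<close> show ?thesis unfolding vZv_def fract_of_poly_def by auto
qed

text \<open>\<open>p(v\<^sup>-\<^sup>1) = p(v)\<close> forces \<open>reflect_poly p = x\<^bsup>degree p\<^esup> p\<close>, which is impossible by degrees
  unless \<open>p\<close> is constant.\<close>

lemma vZv_bar_fixed: "d \<in> vZv \<Longrightarrow> barQ d = d \<Longrightarrow> d = 0"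
proof -
  assume "d \<in> vZv" and fixed: "barQ d = d"
  then obtain p where p: "d = Fract p 1" "coeff p 0 = 0" unfolding vZv_def by blast
  from fixed p have "subst_inv p = fract_of_poly p"
    by (simp add: barQ_Fract fract_of_poly_def)
  then have "fract_of_poly (reflect_poly p) = fract_of_poly ([:0, 1:] ^ degree p * p)"
    by (simp add: subst_inv_reflect V_eq fract_of_poly_power fract_of_poly_mult)
  then have r: "reflect_poly p = [:0, 1:] ^ degree p * p" by (simp add: fract_of_poly_inject)
  show "d = 0"
  proof (cases "p = 0")
    case False
    then have "degree ([:0, 1::rat:] ^ degree p * p) = degree p + degree p"
      by (simp add: degree_mult_eq degree_power_eq)
    with r degree_reflect_poly_le[of p] have "degree p = 0" by simp
    with p False show ?thesis by (metis degree_0_id pCons_0_0)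
  qed (simp add: p Zero_fract_def)
qed

lemma bar_invariant_vZv_eq_0:
  assumes n: "1 \<le> n" "k \<le> n" and d: "inM n k d" "bar_op n k d = d" "\<forall>x\<in>Eset n k. d x \<in> vZv"
  shows "d = (\<lambda>x. 0)"
proof (rule ccontr)
  assume "d \<noteq> (\<lambda>x. 0)"
  let ?S = "{x \<in> Eset n k. d x \<noteq> 0}"
  have fin: "finite ?S" using finite_Eset by simp
  moreover have "?S \<noteq> {}" using \<open>d \<noteq> (\<lambda>x. 0)\<close> d(1) by (auto simp: inM_def fun_eq_iff)
  ultimately have "Max (weight ` ?S) \<in> weight ` ?S" by simp
  then obtain x0 where x0: "x0 \<in> ?S" "weight x0 = Max (weight ` ?S)" by auto
  have "weight y \<le> weight x0" if "d y \<noteq> 0" for y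
    unfolding x0(2) by (rule Max_ge) (use fin that d(1) in \<open>auto simp: inM_def\<close>)
  then have "bar_op n k d x0 = barQ (d x0)" using bar_op_coeff_top[OF n d(1)] x0(1) by blast
  with d(2) have "barQ (d x0) = d x0" by simp
  with d(3) x0(1) vZv_bar_fixed show False by auto
qed

definition sign_vec :: "nat \<Rightarrow> nat \<Rightarrow> modM" where
  "sign_vec n k = (\<lambda>x. if x \<in> Eset n k then (- V) ^ (weight (low_seq n k) - weight x) else 0)"

lemma inM_sign_vec: "inM n k (sign_vec n k)"
  by (simp add: inM_def sign_vec_def)

lemma sign_vec_low_seq: "k \<le> n \<Longrightarrow> sign_vec n k (low_seq n k) = 1"
  by (simp add: sign_vec_def low_seq_in_Eset)

lemma sign_vec_TF:
  assumes "xs @ True # False # ys \<in> Eset n k"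
  shows "sign_vec n k (xs @ True # False # ys) = - V * sign_vec n k (xs @ False # True # ys)"
proof -
  have "weight (xs @ False # True # ys) \<le> weight (low_seq n k)"
    using assms Eset_FT_TF weight_low_seq_max by blast
  then have "weight (low_seq n k) - weight (xs @ True # False # ys)
      = Suc (weight (low_seq n k) - weight (xs @ False # True # ys))"
    by (simp add: weight_FT)
  with assms Eset_FT_TF show ?thesis by (simp add: sign_vec_def)
qed

lemma Tact_sign_vec:
  assumes i: "1 \<le> i" "i \<le> n - 1"
  shows "Tact n k i (sign_vec n k) = (\<lambda>x. - inverse V * sign_vec n k x)"
proof
  fix x
  show "Tact n k i (sign_vec n k) x = - inverse V * sign_vec n k x"
  proof (cases "x \<in> Eset n k")
    case False
    then show ?thesis by (simp add: Tact_outside sign_vec_def)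
  next
    case True
    obtain xs a b ys where x: "x = xs @ a # b # ys" "length xs = i - 1"
      by (rule split_at_window[of "i - 1" x]) (use i True in \<open>auto simp: Eset_length\<close>)
    with i have i1: "i = Suc (length xs)" by simp
    from True show ?thesis unfolding x(1)
      by (cases a; cases b) (simp_all add: Tact_at[OF i1] sign_vec_TF Eset_FT_TF field_simps)
  qed
qed

lemma sign_eigenvector_eq:
  assumes k: "k \<le> n" and u: "inM n k u"
    and eigen: "\<And>i. 1 \<le> i \<Longrightarrow> i \<le> n - 1 \<Longrightarrow> Tact n k i u = (\<lambda>x. - inverse V * u x)"
  shows "u = (\<lambda>x. u (low_seq n k) * sign_vec n k x)"
proof
  fix x
  show "u x = u (low_seq n k) * sign_vec n k x"
  proof (cases "x \<in> Eset n k")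
    case False
    with u show ?thesis by (simp add: inM_def sign_vec_def)
  next
    case True
    then show ?thesis
    proof (induction "weight (low_seq n k) - weight x" arbitrary: x rule: less_induct)
      case less
      show ?case
      proof (cases "x = low_seq n k")
        case True
        then show ?thesis using sign_vec_low_seq[OF k] by simp
      next
        case False
        then obtain xs ys where x: "x = xs @ True # False # ys" using find_TF less.prems by blast
        let ?x' = "xs @ False # True # ys"
        have x': "?x' \<in> Eset n k" using less.prems x Eset_FT_TF by simp
        have "weight ?x' \<le> weight (low_seq n k)" by (rule weight_low_seq_max[OF x'])
        then have IH: "u ?x' = u (low_seq n k) * sign_vec n k ?x'"
          using less.hyps[OF _ x'] x weight_FT[of xs ys] by simp
        have i: "1 \<le> Suc (length xs)" "Suc (length xs) \<le> n - 1" using Eset_length[OF less.prems] x by auto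
        have "u ?x' = - inverse V * u x"
          using fun_cong[OF eigen[OF i], of x] less.prems x by (simp add: Tact_at)
        then have "u x = - V * u ?x'" by (simp add: field_simps)
        with IH less.prems x sign_vec_TF show ?thesis by simp
      qed
    qed
  qed
qed

lemma bar_op_sign_vec:
  assumes n: "1 \<le> n" "k \<le> n"
  shows "bar_op n k (sign_vec n k) = sign_vec n k"
proof -
  have "Tact n k i (bar_op n k (sign_vec n k)) = (\<lambda>x. - inverse V * bar_op n k (sign_vec n k) x)"
    if i: "1 \<le> i" "i \<le> n - 1" for i
  proof -
    have T: "Tminus n k i vdiff (sign_vec n k) = (\<lambda>x. (- V) * sign_vec n k x)"
      using Tact_sign_vec[OF i] by (simp add: Tminus_def fun_eq_iff algebra_simps)
    have "Tact n k i (bar_op n k (sign_vec n k)) = bar_op n k (Tminus n k i vdiff (sign_vec n k))"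
      using bar_op_Tinv[OF i] by simp
    also have "\<dots> = (\<lambda>x. barQ (- V) * bar_op n k (sign_vec n k) x)"
      unfolding T by (rule bar_op_scale)
    finally show ?thesis by (simp add: barQ_minus barQ_V)
  qed
  then have "bar_op n k (sign_vec n k) = (\<lambda>x. bar_op n k (sign_vec n k) (low_seq n k) * sign_vec n k x)"
    by (rule sign_eigenvector_eq[OF n(2) inM_bar_op])
  also have "bar_op n k (sign_vec n k) (low_seq n k) = 1"
  proof -
    have "weight y \<le> weight (low_seq n k)" if "sign_vec n k y \<noteq> 0" for y
      using that weight_low_seq_max by (auto simp: sign_vec_def split: if_splits)
    then show ?thesis
      using bar_op_coeff_top[OF n inM_sign_vec low_seq_in_Eset[OF n(2)]] sign_vec_low_seq[OF n(2)] by simp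
  qed
  finally show ?thesis by simp
qed

lemma sign_vec_vZv:
  assumes "k \<le> n" "x \<in> Eset n k"
  shows "sign_vec n k x - basis (low_seq n k) x \<in> vZv"
proof (cases "x = low_seq n k")
  case True
  then show ?thesis using sign_vec_low_seq[OF assms(1)] vZv_0 by (simp add: basis_def)
next
  case False
  then obtain xs ys where x: "x = xs @ True # False # ys" using find_TF assms(2) by blast
  then have "xs @ False # True # ys \<in> Eset n k" using assms(2) Eset_FT_TF by simp
  then have "Suc (weight x) \<le> weight (low_seq n k)" using weight_low_seq_max x weight_FT by metis
  with False assms(2) show ?thesis by (simp add: basis_def sign_vec_def vZv_power)
qed

theorem CJ_low_seq:
  assumes n: "1 \<le> n" "k \<le> n"
  shows "CJ n k (low_seq n k) = sign_vec n k"
  unfolding CJ_def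
proof (rule the_equality)
  have "barM n k (sign_vec n k) = sign_vec n k"
    using barM_eq_bar_op[OF n inM_sign_vec] bar_op_sign_vec[OF n] by simp
  then show "inM n k (sign_vec n k) \<and> barM n k (sign_vec n k) = sign_vec n k
      \<and> (\<forall>x\<in>Eset n k. sign_vec n k x - basis (low_seq n k) x \<in> vZv)"
    using inM_sign_vec sign_vec_vZv[OF n(2)] by blast
next
  fix c assume c: "inM n k c \<and> barM n k c = c \<and> (\<forall>x\<in>Eset n k. c x - basis (low_seq n k) x \<in> vZv)"
  let ?d = "\<lambda>x. c x - sign_vec n k x"
  have "inM n k ?d" using c inM_sign_vec by (simp add: inM_def)
  moreover have "bar_op n k c = c" using c barM_eq_bar_op[OF n, of c] by simp
  then have "bar_op n k ?d = ?d" using bar_op_diff[of n k c "sign_vec n k"] bar_op_sign_vec[OF n] by simp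
  moreover have "\<forall>x\<in>Eset n k. ?d x \<in> vZv"
    using c sign_vec_vZv[OF n(2)] vZv_diff by fastforce
  ultimately have "?d = (\<lambda>x. 0)" by (rule bar_invariant_vZv_eq_0[OF n])
  then show "c = sign_vec n k" by (simp add: fun_eq_iff)
qed

section \<open>Hook coefficients and products of factors\<close>

definition hook_coeff :: "nat \<Rightarrow> qv" where
  "hook_coeff r = V ^ r / qint r"

lemma vdiff_nonzero: "vdiff \<noteq> 0"
proof
  assume "vdiff = 0"
  then have "V ^ 2 = 1" by (simp add: field_simps power2_eq_square)
  then show False using V_power_neq_1[of 2] by simp
qed

lemma hook_coeff_1 [simp]: "hook_coeff 1 = V" "hook_coeff (Suc 0) = V"
  using vdiff_nonzero by (simp_all add: hook_coeff_def qint_def)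

lemma hook_coeff_eq:
  assumes "1 \<le> r"
  shows "hook_coeff r = vdiff * V ^ (2 * r) / (V ^ (2 * r) - 1)"
proof -
  define X where "X = V ^ r"
  have X2: "V ^ (2 * r) = X * X" by (simp add: X_def mult_2 power_add)
  have X: "X \<noteq> 0" "X * X \<noteq> 1" using V_power_neq_1[of "2 * r"] assms X2 by (simp_all add: X_def)
  have "X - inverse X = (X * X - 1) / X" using X by (simp add: field_simps)
  then have "X / ((X - inverse X) / vdiff) = vdiff * (X * X) / (X * X - 1)"
    using X vdiff_nonzero by (simp add: field_simps)
  then show ?thesis by (simp add: hook_coeff_def qint_def X_def X2 power_inverse)
qed

text \<open>The relation that makes \<open>(T\<^sub>i - c\<^sub>1)(T\<^sub>i\<^sub>+\<^sub>1 - c\<^sub>3)(T\<^sub>i - c\<^sub>2)\<close> satisfy the Yang-Baxter equation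
  for consecutive hook lengths \<open>x\<close>, \<open>x + y\<close>, \<open>y\<close>.\<close>

lemma hook_coeff_add:
  assumes "1 \<le> x" "1 \<le> y"
  shows "hook_coeff (x + y) * (hook_coeff x + hook_coeff y - vdiff) = hook_coeff x * hook_coeff y"
proof -
  define P Q where "P = V ^ (2 * x)" and "Q = V ^ (2 * y)"
  have nz: "P - 1 \<noteq> 0" "Q - 1 \<noteq> 0" "P * Q - 1 \<noteq> 0"
    using V_power_neq_1[of "2 * x"] V_power_neq_1[of "2 * y"] V_power_neq_1[of "2 * (x + y)"] assms
    by (simp_all add: P_def Q_def power_add distrib_left)
  have ident: "q * (P * Q) * C * (q * P * A + q * Q * B - q) = q * P * A * (q * Q * B)"
    if "A * (P - 1) = 1" "B * (Q - 1) = 1" "C * (P * Q - 1) = 1" for A B C q :: qv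
    using that by algebra
  have "hook_coeff x = vdiff * P * inverse (P - 1)" "hook_coeff y = vdiff * Q * inverse (Q - 1)"
    "hook_coeff (x + y) = vdiff * (P * Q) * inverse (P * Q - 1)"
    using hook_coeff_eq[of x] hook_coeff_eq[of y] hook_coeff_eq[of "x + y"] assms
    by (simp_all add: P_def Q_def power_add distrib_left divide_inverse)
  then show ?thesis
    using ident[of "inverse (P - 1)" "inverse (Q - 1)" "inverse (P * Q - 1)" vdiff] nz by simp
qed

lemma Tact_Tminus_V:
  assumes u: "inM n k u" and g: "1 \<le> g" "g + 1 \<le> n"
  shows "Tact n k g (Tminus n k g V u) = (\<lambda>x. - inverse V * Tminus n k g V u x)"
proof
  fix x
  show "Tact n k g (Tminus n k g V u) x = - inverse V * Tminus n k g V u x"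
  proof (cases "x \<in> Eset n k")
    case False
    with u show ?thesis by (simp add: Tact_outside Tminus_def inM_def)
  next
    case True
    obtain xs a b ys where x: "x = xs @ a # b # ys" "length xs = g - 1"
      by (rule split_at_window[of "g - 1" x]) (use g True in \<open>auto simp: Eset_length\<close>)
    with g have g1: "g = Suc (length xs)" by simp
    from True show ?thesis unfolding x(1) Tminus_def
      by (cases a; cases b) (simp_all add: Tact_at[OF g1] Eset_def algebra_simps)
  qed
qed

text \<open>A list of pairs \<open>(g, r)\<close> stands for the product of the factors \<open>T\<^sub>g - hook_coeff r\<close>,
  the head of the list being the leftmost factor.\<close>

definition Tprod :: "nat \<Rightarrow> nat \<Rightarrow> (nat \<times> nat) list \<Rightarrow> modM \<Rightarrow> modM" where
  "Tprod n k ps m = foldr (\<lambda>p u. Tminus n k (fst p) (hook_coeff (snd p)) u) ps m"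

lemma Tprod_Nil [simp]: "Tprod n k [] m = m"
  by (simp add: Tprod_def)

lemma Tprod_Cons [simp]: "Tprod n k (p # ps) m = Tminus n k (fst p) (hook_coeff (snd p)) (Tprod n k ps m)"
  by (simp add: Tprod_def)

lemma Tprod_append: "Tprod n k (ps @ qs) m = Tprod n k ps (Tprod n k qs m)"
  by (simp add: Tprod_def)

lemma inM_Tprod: "inM n k m \<Longrightarrow> inM n k (Tprod n k ps m)"
  by (induct ps) (simp_all add: inM_Tminus)

definition distant :: "nat \<Rightarrow> nat \<Rightarrow> nat \<Rightarrow> bool" where
  "distant n g g' \<longleftrightarrow> 1 \<le> g \<and> g + 1 \<le> n \<and> 1 \<le> g' \<and> g' + 1 \<le> n \<and> (g + 2 \<le> g' \<or> g' + 2 \<le> g)"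

lemma distant_sym: "distant n g g' \<Longrightarrow> distant n g' g"
  by (auto simp: distant_def)

lemma Tminus_commute_distant:
  "distant n g g' \<Longrightarrow> Tminus n k g c (Tminus n k g' d m) = Tminus n k g' d (Tminus n k g c m)"
  unfolding distant_def using Tminus_commute[of g g' n k c d m] Tminus_commute[of g' g n k d c m] by auto

lemma Tprod_commute:
  "\<forall>p\<in>set ps. distant n (fst p) g \<Longrightarrow> Tprod n k ps (Tminus n k g c m) = Tminus n k g c (Tprod n k ps m)"
  by (induct ps) (simp_all add: Tminus_commute_distant)

lemma Tprod_swap:
  "\<forall>p\<in>set P. \<forall>q\<in>set Q. distant n (fst p) (fst q) \<Longrightarrow> Tprod n k (P @ Q) m = Tprod n k (Q @ P) m"
proof (induct P arbitrary: m)
  case (Cons p P)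
  have "Tprod n k ((p # P) @ Q) m = Tminus n k (fst p) (hook_coeff (snd p)) (Tprod n k Q (Tprod n k P m))"
    using Cons by (simp add: Tprod_append)
  also have "\<dots> = Tprod n k Q (Tminus n k (fst p) (hook_coeff (snd p)) (Tprod n k P m))"
    using Cons.prems by (intro Tprod_commute[symmetric]) (auto intro: distant_sym)
  finally show ?case by (simp add: Tprod_append)
qed simp

text \<open>Yang-Baxter moves: \<open>T\<^sub>h - v\<close> passes leftwards through two adjacent boxes of a row (resp. a
  column) and comes out as \<open>T\<^sub>h\<^sub>-\<^sub>1 - v\<close> (resp. \<open>T\<^sub>h\<^sub>+\<^sub>1 - v\<close>).\<close>

lemma Tprod_push_row:
  assumes L: "\<forall>p\<in>set L. h + 1 \<le> fst p \<and> fst p + 1 \<le> n" and R: "\<forall>p\<in>set R. 1 \<le> fst p \<and> fst p + 2 \<le> h"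
    and h: "2 \<le> h" "h + 1 \<le> n" and a: "1 \<le> a"
  shows "Tprod n k (L @ [(h, a), (h - 1, a + 1)] @ R) (Tminus n k h V m)
       = Tminus n k (h - 1) V (Tprod n k (L @ [(h, a + 1), (h - 1, a)] @ R) m)"
proof -
  have YBE: "Tminus n k h (hook_coeff a) (Tminus n k (h - 1) (hook_coeff (a + 1)) (Tminus n k h V u))
      = Tminus n k (h - 1) V (Tminus n k h (hook_coeff (a + 1)) (Tminus n k (h - 1) (hook_coeff a) u))" for u
    using Tminus_YBE[of "hook_coeff (a + 1)" V "hook_coeff a" "h - 1" n k u] hook_coeff_add[of 1 a] h a
    by (simp add: add.commute)
  have "Tprod n k R (Tminus n k h V m) = Tminus n k h V (Tprod n k R m)"
    using R h by (intro Tprod_commute) (auto simp: distant_def)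
  moreover have "Tprod n k L (Tminus n k (h - 1) V u) = Tminus n k (h - 1) V (Tprod n k L u)" for u
    using L h by (intro Tprod_commute) (auto simp: distant_def)
  ultimately show ?thesis by (simp add: Tprod_append YBE[simplified])
qed

lemma Tprod_push_col:
  assumes L: "\<forall>p\<in>set L. 1 \<le> fst p \<and> fst p + 1 \<le> h" and R: "\<forall>p\<in>set R. h + 2 \<le> fst p \<and> fst p + 1 \<le> n"
    and h: "1 \<le> h" "h + 2 \<le> n" and b: "1 \<le> b"
  shows "Tprod n k (L @ [(h, b), (h + 1, b + 1)] @ R) (Tminus n k h V m)
       = Tminus n k (h + 1) V (Tprod n k (L @ [(h, b + 1), (h + 1, b)] @ R) m)"
proof -
  have YBE: "Tminus n k h (hook_coeff b) (Tminus n k (h + 1) (hook_coeff (b + 1)) (Tminus n k h V u))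
      = Tminus n k (h + 1) V (Tminus n k h (hook_coeff (b + 1)) (Tminus n k (h + 1) (hook_coeff b) u))" for u
    using Tminus_YBE[of "hook_coeff (b + 1)" "hook_coeff b" V h n k u] hook_coeff_add[of b 1] h b
    by simp
  have "Tprod n k R (Tminus n k h V m) = Tminus n k h V (Tprod n k R m)"
    using R h by (intro Tprod_commute) (auto simp: distant_def)
  moreover have "Tprod n k L (Tminus n k (h + 1) V u) = Tminus n k (h + 1) V (Tprod n k L u)" for u
    using L h by (intro Tprod_commute) (auto simp: distant_def)
  ultimately show ?thesis by (simp add: Tprod_append YBE[simplified])
qed

lemma Tprod_interleave:
  assumes "sorted_wrt (>) js"
    and distant: "\<And>j j' q. j \<in> set js \<Longrightarrow> j' \<in> set js \<Longrightarrow> j < j' \<Longrightarrow> q \<in> set (B j') \<Longrightarrow> distant n (fst (A j)) (fst q)"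
  shows "Tprod n k (map A js @ concat (map B js)) m = Tprod n k (concat (map (\<lambda>j. A j # B j) js)) m"
  using assms
proof (induct js arbitrary: m)
  case (Cons j js)
  have "Tprod n k (map A js @ B j) u = Tprod n k (B j @ map A js) u" for u
  proof (rule Tprod_swap, intro ballI)
    fix p q assume "p \<in> set (map A js)" and q: "q \<in> set (B j)"
    then obtain j' where "j' \<in> set js" "p = A j'" by auto
    with Cons.prems(1) have "j' < j" by simp
    with Cons.prems(2)[of j' j q] \<open>j' \<in> set js\<close> \<open>p = A j'\<close> q show "distant n (fst p) (fst q)" by simp
  qed
  then have "Tprod n k (map A (j # js) @ concat (map B (j # js))) m
      = Tminus n k (fst (A j)) (hook_coeff (snd (A j))) (Tprod n k (B j) (Tprod n k (map A js @ concat (map B js)) m))"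
    by (simp add: Tprod_append)
  also have "Tprod n k (map A js @ concat (map B js)) m = Tprod n k (concat (map (\<lambda>j. A j # B j) js)) m"
    by (rule Cons.hyps) (use Cons.prems in auto)
  finally show ?case by (simp add: Tprod_append)
qed simp

section \<open>The rectangle: \<open>X\<^sub>\<lambda> \<one>\<close> is the sign vector\<close>

text \<open>The box \<open>(i, j)\<close> of the \<open>k \<times> (n - k)\<close> rectangle contributes the factor \<open>T\<^sub>k\<^sub>+\<^sub>j\<^sub>-\<^sub>i - v\<^sup>r/[r]\<close>
  whose hook length is \<open>r = (k - i) + (n - k - j) + 1\<close>.\<close>

definition box :: "nat \<Rightarrow> nat \<Rightarrow> nat \<Rightarrow> nat \<Rightarrow> nat \<times> nat" where
  "box n k i j = (k + j - i, (k - i) + (n - k - j) + 1)"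

definition row_boxes :: "nat \<Rightarrow> nat \<Rightarrow> nat \<Rightarrow> (nat \<times> nat) list" where
  "row_boxes n k i = map (box n k i) (rev [1..<n - k + 1])"

definition col_boxes :: "nat \<Rightarrow> nat \<Rightarrow> nat \<Rightarrow> (nat \<times> nat) list" where
  "col_boxes n k j = map (\<lambda>i. box n k i j) (rev [1..<k + 1])"

definition rect_rows :: "nat \<Rightarrow> nat \<Rightarrow> (nat \<times> nat) list" where
  "rect_rows n k = concat (map (row_boxes n k) (rev [1..<k + 1]))"

definition rect_cols :: "nat \<Rightarrow> nat \<Rightarrow> (nat \<times> nat) list" where
  "rect_cols n k = concat (map (col_boxes n k) (rev [1..<n - k + 1]))"

lemma Tprod_rect_rows_cols:
  assumes "k \<le> n"
  shows "Tprod n k (rect_rows n k) m = Tprod n k (rect_cols n k) m"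
proof -
  let ?js = "rev [1..<n - k + 1]"
  have aux: "t \<le> k \<Longrightarrow> Tprod n k (concat (map (row_boxes n k) (rev [1..<t + 1]))) m
        = Tprod n k (concat (map (\<lambda>j. map (\<lambda>i. box n k i j) (rev [1..<t + 1])) ?js)) m" for t
  proof (induct t arbitrary: m)
    case (Suc t)
    let ?A = "\<lambda>j. box n k (Suc t) j" and ?B = "\<lambda>j. map (\<lambda>i. box n k i j) (rev [1..<t + 1])"
    have "Tprod n k (concat (map (row_boxes n k) (rev [1..<Suc t + 1]))) m
        = Tprod n k (map ?A ?js) (Tprod n k (concat (map (row_boxes n k) (rev [1..<t + 1]))) m)"
      by (simp add: Tprod_append row_boxes_def)
    also have "\<dots> = Tprod n k (map ?A ?js @ concat (map ?B ?js)) m"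
      using Suc by (simp add: Tprod_append)
    also have "\<dots> = Tprod n k (concat (map (\<lambda>j. ?A j # ?B j) ?js)) m"
    proof (rule Tprod_interleave)
      show "sorted_wrt (>) ?js" by (simp add: sorted_wrt_rev sorted_wrt_upt del: upt_Suc)
      fix j j' q assume "j \<in> set ?js" "j' \<in> set ?js" "j < j'" "q \<in> set (?B j')"
      with Suc.prems assms show "distant n (fst (?A j)) (fst q)" by (auto simp: distant_def box_def)
    qed
    also have "concat (map (\<lambda>j. ?A j # ?B j) ?js) = concat (map (\<lambda>j. map (\<lambda>i. box n k i j) (rev [1..<Suc t + 1])) ?js)"
      by simp
    finally show ?case .
  qed (simp add: map_replicate_const)
  from aux[OF le_refl] show ?thesis unfolding rect_rows_def rect_cols_def col_boxes_def .
qed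

lemma rev_upt_split:
  assumes "2 \<le> j0" "j0 \<le> N"
  shows "rev [1..<N + 1] = rev [Suc j0..<N + 1] @ j0 # (j0 - 1) # rev [1..<j0 - 1]"
proof -
  have "[1..<N + 1] = [1..<j0 - 1] @ [j0 - 1..<N + 1]"
    using upt_add_eq_append[of 1 "j0 - 1" "N + 2 - j0"] assms by (simp del: upt_Suc)
  also have "[j0 - 1..<N + 1] = (j0 - 1) # j0 # [Suc j0..<N + 1]"
    using assms by (simp add: upt_conv_Cons del: upt_Suc)
  finally show ?thesis by simp
qed

lemma Tprod_row_push:
  assumes i: "1 \<le> i" "i \<le> k" and j0: "2 \<le> j0" "j0 \<le> n - k"
  shows "\<exists>ps. Tprod n k (row_boxes n k i) (Tminus n k (k + j0 - i) V m) = Tminus n k (k + j0 - i - 1) V (Tprod n k ps m)"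
proof -
  let ?h = "k + j0 - i" and ?a = "(k - i) + (n - k - j0) + 1"
  let ?L = "map (box n k i) (rev [Suc j0..<n - k + 1])" and ?R = "map (box n k i) (rev [1..<j0 - 1])"
  have "box n k i j0 = (?h, ?a)" "box n k i (j0 - 1) = (?h - 1, ?a + 1)"
    using i j0 by (simp_all add: box_def)
  then have r: "row_boxes n k i = ?L @ [(?h, ?a), (?h - 1, ?a + 1)] @ ?R"
    unfolding row_boxes_def rev_upt_split[OF j0] by simp
  have "Tprod n k (?L @ [(?h, ?a), (?h - 1, ?a + 1)] @ ?R) (Tminus n k ?h V m)
      = Tminus n k (?h - 1) V (Tprod n k (?L @ [(?h, ?a + 1), (?h - 1, ?a)] @ ?R) m)"
    using i j0 by (intro Tprod_push_row) (auto simp: box_def)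
  then show ?thesis unfolding r by blast
qed

lemma Tprod_col_push:
  assumes j: "1 \<le> j" "j \<le> n - k" and i0: "2 \<le> i0" "i0 \<le> k"
  shows "\<exists>ps. Tprod n k (col_boxes n k j) (Tminus n k (k + j - i0) V m) = Tminus n k (k + j - i0 + 1) V (Tprod n k ps m)"
proof -
  let ?h = "k + j - i0" and ?b = "(k - i0) + (n - k - j) + 1"
  let ?L = "map (\<lambda>i. box n k i j) (rev [Suc i0..<k + 1])" and ?R = "map (\<lambda>i. box n k i j) (rev [1..<i0 - 1])"
  have "box n k i0 j = (?h, ?b)" "box n k (i0 - 1) j = (?h + 1, ?b + 1)"
    using i0 j by (simp_all add: box_def Suc_diff_le)
  then have r: "col_boxes n k j = ?L @ [(?h, ?b), (?h + 1, ?b + 1)] @ ?R"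
    unfolding col_boxes_def rev_upt_split[OF i0] by simp
  have "Tprod n k (?L @ [(?h, ?b), (?h + 1, ?b + 1)] @ ?R) (Tminus n k ?h V m)
      = Tminus n k (?h + 1) V (Tprod n k (?L @ [(?h, ?b + 1), (?h + 1, ?b)] @ ?R) m)"
    using i0 j by (intro Tprod_push_col) (auto simp: box_def)
  then show ?thesis unfolding r by blast
qed

lemma Tprod_rows_push:
  assumes c: "1 \<le> c" "c + 1 \<le> n - k"
  shows "t \<le> k \<Longrightarrow> \<exists>ps. Tprod n k (concat (map (row_boxes n k) (rev [1..<t + 1]))) (Tminus n k (k + c) V m)
      = Tminus n k (k + c - t) V (Tprod n k ps m)"
proof (induct t arbitrary: m)
  case 0
  show ?case by (intro exI[of _ "[]"]) simp
next
  case (Suc t)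
  then obtain ps where ps: "Tprod n k (concat (map (row_boxes n k) (rev [1..<t + 1]))) (Tminus n k (k + c) V m)
      = Tminus n k (k + c - t) V (Tprod n k ps m)"
    by auto
  obtain ps' where "Tprod n k (row_boxes n k (t + 1)) (Tminus n k (k + (c + 1) - (t + 1)) V (Tprod n k ps m))
      = Tminus n k (k + (c + 1) - (t + 1) - 1) V (Tprod n k ps' (Tprod n k ps m))"
    using Tprod_row_push[of "t + 1" k "c + 1" n] Suc.prems c by auto
  moreover have "k + (c + 1) - (t + 1) = k + c - t" using Suc.prems by simp
  ultimately show ?case using ps by (auto simp: Tprod_append intro!: exI[of _ "ps' @ ps"])
qed

lemma Tprod_cols_push:
  assumes c: "1 \<le> c" "c + 1 \<le> k"
  shows "t \<le> n - k \<Longrightarrow> \<exists>ps. Tprod n k (concat (map (col_boxes n k) (rev [1..<t + 1]))) (Tminus n k (k - c) V m)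
      = Tminus n k (k - c + t) V (Tprod n k ps m)"
proof (induct t arbitrary: m)
  case 0
  show ?case by (intro exI[of _ "[]"]) simp
next
  case (Suc t)
  then obtain ps where ps: "Tprod n k (concat (map (col_boxes n k) (rev [1..<t + 1]))) (Tminus n k (k - c) V m)
      = Tminus n k (k - c + t) V (Tprod n k ps m)"
    by auto
  obtain ps' where "Tprod n k (col_boxes n k (t + 1)) (Tminus n k (k + (t + 1) - (c + 1)) V (Tprod n k ps m))
      = Tminus n k (k + (t + 1) - (c + 1) + 1) V (Tprod n k ps' (Tprod n k ps m))"
    using Tprod_col_push[of "t + 1" n k "c + 1"] Suc.prems c by auto
  moreover have "k + (t + 1) - (c + 1) = k - c + t" using c by simp
  ultimately show ?case using ps by (auto simp: Tprod_append intro!: exI[of _ "ps' @ ps"])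
qed

text \<open>Away from the position \<open>k\<close> of its sign change, \<open>\<one>\<close> is an eigenvector of \<open>T\<^sub>h\<close> with eigenvalue
  \<open>-v\<^sup>-\<^sup>1\<close>, hence lies in the image of \<open>T\<^sub>h - v\<close>.\<close>

lemma basis_one_seq_eq_Tminus_V:
  assumes "k \<le> n" "1 \<le> h" "h + 1 \<le> n" "h \<noteq> k"
  shows "basis (one_seq n k) = Tminus n k h V (\<lambda>x. inverse (- inverse V - V) * basis (one_seq n k) x)"
proof -
  obtain xs c ys where one: "one_seq n k = xs @ c # c # ys" "Suc (length xs) = h"
  proof (cases "h < k")
    case True
    then have "replicate k True = replicate (h - 1) True @ True # True # replicate (k - h - 1) True"
      using assms by (simp add: replicate_add[symmetric] replicate_Suc_append[symmetric] flip: replicate_Suc)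
    with True assms that show ?thesis by (auto simp: one_seq_def)
  next
    case False
    with assms have "replicate (n - k) False = replicate (h - 1 - k) False @ False # False # replicate (n - h - 1) False"
      by (simp add: replicate_add[symmetric] replicate_Suc_append[symmetric] flip: replicate_Suc)
    with False assms that[of "replicate k True @ replicate (h - 1 - k) False"] show ?thesis
      by (auto simp: one_seq_def)
  qed
  have nz: "- inverse V - V \<noteq> 0"
  proof
    assume "- inverse V - V = 0"
    then have "V * V = - 1" by (simp add: field_simps)
    then have "[:0, 1::rat:] * [:0, 1:] = - 1"
      by (simp add: V_eq fract_of_poly_minus flip: fract_of_poly_mult fract_of_poly_1 fract_of_poly_inject)
    then have "degree ([:0, 1::rat:] * [:0, 1:]) = 0" by simp
    then show False by (simp add: degree_mult_eq)
  qed
  have "Tminus n k h V (basis (one_seq n k)) = (\<lambda>x. (- inverse V - V) * basis (one_seq n k) x)"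
    using Tminus_basis_equal[of xs c ys n k V] one one_seq_in_Eset[OF assms(1)] by simp
  with nz show ?thesis by (simp add: Tminus_scale fun_eq_iff)
qed

lemma rect_rows_first:
  assumes "1 \<le> k" "k + 1 \<le> n"
  shows "\<exists>ps. rect_rows n k = (n - k, 1) # ps"
proof -
  have "rev [1..<k + 1] = k # rev [1..<k]" "rev [1..<n - k + 1] = (n - k) # rev [1..<n - k]"
    using assms by simp_all
  moreover have "box n k k (n - k) = (n - k, 1)" using assms by (simp add: box_def)
  ultimately show ?thesis by (simp add: rect_rows_def row_boxes_def)
qed

text \<open>For every \<open>g\<close>, \<open>X\<^sub>\<lambda> \<one>\<close> lies in the image of \<open>T\<^sub>g - v\<close>: for \<open>g = n - k\<close> this is its leftmost
  factor, otherwise a factor \<open>T\<^sub>h - v\<close> with \<open>h \<noteq> k\<close> split off from \<open>\<one>\<close> is pushed through all rows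
  (\<open>g < n - k\<close>) or all columns (\<open>g > n - k\<close>) to the left end, arriving as \<open>T\<^sub>g - v\<close>.\<close>

lemma Tprod_rect_in_image:
  assumes k: "1 \<le> k" "k + 1 \<le> n" and g: "1 \<le> g" "g \<le> n - 1"
  shows "\<exists>u. inM n k u \<and> Tprod n k (rect_rows n k) (basis (one_seq n k)) = Tminus n k g V u"
proof -
  let ?one = "basis (one_seq n k)"
  let ?v = "\<lambda>x. inverse (- inverse V - V) * ?one x"
  have one: "inM n k ?one" using one_seq_in_Eset[of k n] k by (auto simp: inM_def basis_def)
  then have v: "inM n k ?v" by (simp add: inM_def)
  consider "g = n - k" | "g < n - k" | "n - k < g" by linarith
  then show ?thesis
  proof cases
    case 1
    obtain ps where "rect_rows n k = (n - k, 1) # ps" using rect_rows_first[OF k] by blast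
    with 1 show ?thesis using inM_Tprod[OF one, of ps] by auto
  next
    case 2
    have "?one = Tminus n k (k + g) V ?v" using k g 2 by (intro basis_one_seq_eq_Tminus_V) auto
    moreover obtain ps where "Tprod n k (rect_rows n k) (Tminus n k (k + g) V ?v) = Tminus n k g V (Tprod n k ps ?v)"
      using Tprod_rows_push[of g n k k ?v] 2 g by (auto simp: rect_rows_def)
    ultimately show ?thesis using inM_Tprod[OF v] by auto
  next
    case 3
    have c: "1 \<le> n - g" "n - g + 1 \<le> k" using g 3 k by auto
    have "?one = Tminus n k (k - (n - g)) V ?v" using k g c by (intro basis_one_seq_eq_Tminus_V) auto
    moreover obtain ps where "Tprod n k (rect_cols n k) (Tminus n k (k - (n - g)) V ?v)
        = Tminus n k (k - (n - g) + (n - k)) V (Tprod n k ps ?v)"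
      using Tprod_cols_push[OF c, where t = "n - k" and m = ?v] by (auto simp: rect_cols_def)
    moreover have "k - (n - g) + (n - k) = g" using c g k by simp
    ultimately show ?thesis using Tprod_rect_rows_cols[of k n] k inM_Tprod[OF v] by auto
  qed
qed

lemma Tact_Tprod_rect:
  assumes k: "1 \<le> k" "k + 1 \<le> n" and g: "1 \<le> g" "g \<le> n - 1"
  shows "Tact n k g (Tprod n k (rect_rows n k) (basis (one_seq n k)))
       = (\<lambda>x. - inverse V * Tprod n k (rect_rows n k) (basis (one_seq n k)) x)"
proof -
  obtain u where "inM n k u" "Tprod n k (rect_rows n k) (basis (one_seq n k)) = Tminus n k g V u"
    using Tprod_rect_in_image[OF assms] by blast
  with g show ?thesis by (simp add: Tact_Tminus_V)
qed

text \<open>Row \<open>i\<close> of the rectangle moves the \<open>i\<close>-th plus from the right end of the block of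
  pluses across all \<open>n - k\<close> minuses; \<open>path_seq n k i j\<close> is the sign sequence after \<open>j\<close> steps,
  and \<open>after_rows n k t\<close> the one after the first \<open>t\<close> rows.\<close>

definition path_seq :: "nat \<Rightarrow> nat \<Rightarrow> nat \<Rightarrow> nat \<Rightarrow> bool list" where
  "path_seq n k i j = replicate (k - i) True @ replicate j False @ True # replicate (n - k - j) False @ replicate (i - 1) True"

definition after_rows :: "nat \<Rightarrow> nat \<Rightarrow> nat \<Rightarrow> bool list" where
  "after_rows n k t = replicate (k - t) True @ replicate (n - k) False @ replicate t True"

lemma path_seq_in_Eset: "1 \<le> i \<Longrightarrow> i \<le> k \<Longrightarrow> j \<le> n - k \<Longrightarrow> k \<le> n \<Longrightarrow> path_seq n k i j \<in> Eset n k"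
  by (simp add: path_seq_def Eset_def)

lemma path_seq_step:
  assumes "j + 1 \<le> n - k"
  shows "path_seq n k i j = (replicate (k - i) True @ replicate j False) @ True # False # (replicate (n - k - j - 1) False @ replicate (i - 1) True)"
    and "path_seq n k i (j + 1) = (replicate (k - i) True @ replicate j False) @ False # True # (replicate (n - k - j - 1) False @ replicate (i - 1) True)"
proof -
  have "n - k - j = Suc (n - k - j - 1)" using assms by simp
  then show "path_seq n k i j = (replicate (k - i) True @ replicate j False) @ True # False # (replicate (n - k - j - 1) False @ replicate (i - 1) True)"
    by (simp add: path_seq_def)
  show "path_seq n k i (j + 1) = (replicate (k - i) True @ replicate j False) @ False # True # (replicate (n - k - j - 1) False @ replicate (i - 1) True)"
    by (simp add: path_seq_def replicate_Suc_append replicate_append_same)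
qed

lemma path_seq_0: "1 \<le> i \<Longrightarrow> i \<le> k \<Longrightarrow> path_seq n k i 0 = after_rows n k (i - 1)"
  by (simp add: path_seq_def after_rows_def Suc_diff_le replicate_Suc_append[symmetric])

lemma path_seq_end: "1 \<le> i \<Longrightarrow> i \<le> k \<Longrightarrow> path_seq n k i (n - k) = after_rows n k i"
  by (cases i) (simp_all add: path_seq_def after_rows_def)

lemma fst_box: "i \<le> k \<Longrightarrow> fst (box n k i (Suc j)) = Suc (length (replicate (k - i) True @ replicate j False))"
  by (simp add: box_def)

lemma leading_term_row:
  assumes i: "1 \<le> i" "i \<le> k" and "k \<le> n"
  shows "j \<le> n - k \<Longrightarrow> leading_term u (path_seq n k i 0)
      \<Longrightarrow> leading_term (Tprod n k (map (box n k i) (rev [1..<j + 1])) u) (path_seq n k i j)"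
proof (induct j)
  case (Suc j)
  then have j: "j + 1 \<le> n - k" by simp
  have "leading_term (Tprod n k (map (box n k i) (rev [1..<j + 1])) u) (path_seq n k i j)"
    using Suc by simp
  moreover have "path_seq n k i j \<in> Eset n k" using path_seq_in_Eset assms j by simp
  ultimately show ?case
    using leading_term_Tminus[of _ "replicate (k - i) True @ replicate j False"] path_seq_step[OF j] fst_box[OF i(2)]
    by simp
qed simp

lemma leading_term_rect_rows:
  assumes k: "1 \<le> k" "k \<le> n"
  shows "t \<le> k \<Longrightarrow> leading_term (Tprod n k (concat (map (row_boxes n k) (rev [1..<t + 1]))) (basis (one_seq n k)))
      (after_rows n k t)"
proof (induct t)
  case 0
  have "after_rows n k 0 = one_seq n k" by (simp add: after_rows_def one_seq_def)
  then show ?case by (simp add: leading_term_def basis_def)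
next
  case (Suc t)
  then have "leading_term (Tprod n k (concat (map (row_boxes n k) (rev [1..<t + 1]))) (basis (one_seq n k)))
      (path_seq n k (Suc t) 0)"
    by (simp add: path_seq_0)
  then have "leading_term (Tprod n k (row_boxes n k (Suc t))
        (Tprod n k (concat (map (row_boxes n k) (rev [1..<t + 1]))) (basis (one_seq n k))))
      (path_seq n k (Suc t) (n - k))"
    using leading_term_row[of "Suc t" k n "n - k"] Suc.prems k by (simp add: row_boxes_def)
  then show ?case using Suc.prems path_seq_end[of "Suc t" k n] by (simp add: Tprod_append)
qed

theorem Tprod_rect_one_eq_sign_vec:
  assumes k: "1 \<le> k" "k + 1 \<le> n"
  shows "Tprod n k (rect_rows n k) (basis (one_seq n k)) = sign_vec n k"
proof -
  have "inM n k (basis (one_seq n k))" using one_seq_in_Eset[of k n] k by (auto simp: inM_def basis_def)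
  then have "Tprod n k (rect_rows n k) (basis (one_seq n k))
      = (\<lambda>x. Tprod n k (rect_rows n k) (basis (one_seq n k)) (low_seq n k) * sign_vec n k x)"
    using k by (intro sign_eigenvector_eq inM_Tprod Tact_Tprod_rect) auto
  moreover have "leading_term (Tprod n k (rect_rows n k) (basis (one_seq n k))) (low_seq n k)"
    using leading_term_rect_rows[of k n k] k by (simp add: rect_rows_def after_rows_def low_seq_def)
  ultimately show ?thesis by (simp add: leading_term_def)
qed

lemma hact_hprod: "hact n k (hprod hs) m = foldr (hact n k) hs m"
  by (induct hs arbitrary: m) (simp_all add: hprod_def)

lemma rr_rectangle:
  "1 \<le> i \<Longrightarrow> i \<le> k \<Longrightarrow> 1 \<le> j \<Longrightarrow> j \<le> N \<Longrightarrow> rr (replicate k N) i j = (k - i) + (N - j) + 1"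
proof (induction "(k - i) + (N - j)" arbitrary: i j rule: less_induct)
  case less
  have right: "rr (replicate k N) i (j + 1) = (if j + 1 \<le> N then (k - i) + (N - (j + 1)) + 1 else 0)"
  proof (cases "j + 1 \<le> N")
    case False
    then show ?thesis by (subst rr.simps) (simp add: inYD_def)
  qed (use less in simp)
  have below: "rr (replicate k N) (i + 1) j = (if i + 1 \<le> k then (k - (i + 1)) + (N - j) + 1 else 0)"
  proof (cases "i + 1 \<le> k")
    case False
    then show ?thesis by (subst rr.simps) (simp add: inYD_def)
  qed (use less in simp)
  have "rr (replicate k N) i j = max (rr (replicate k N) i (j + 1)) (rr (replicate k N) (i + 1) j) + 1"
    using less.prems by (subst rr.simps) (simp add: inYD_def)
  then show ?case using less.prems unfolding right below by auto
qed

lemma hact_Qfac_rectangle: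
  assumes i: "1 \<le> i" "i \<le> k"
  shows "hact n k (Qfac k (replicate k (n - k)) i) m = Tprod n k (row_boxes n k i) m"
proof -
  let ?r = "rr (replicate k (n - k)) i"
  have "hact n k (Qfac k (replicate k (n - k)) i) m
      = foldr (\<lambda>j u. hact n k (HAdd (HT (k + j - i)) (HScal (- (V ^ ?r j / qint (?r j))))) u) (rev [1..<n - k + 1]) m"
    using i unfolding Qfac_def hact_hprod by (simp only: foldr_map o_def nth_replicate diff_less less_le_trans zero_less_one)
  also have "\<dots> = foldr (\<lambda>j u. Tminus n k (fst (box n k i j)) (hook_coeff (snd (box n k i j))) u) (rev [1..<n - k + 1]) m"
  proof (rule foldr_cong)
    fix j u assume "j \<in> set (rev [1..<n - k + 1])"
    with i have "?r j = (k - i) + (n - k - j) + 1" by (intro rr_rectangle) auto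
    then show "hact n k (HAdd (HT (k + j - i)) (HScal (- (V ^ ?r j / qint (?r j))))) u
        = Tminus n k (fst (box n k i j)) (hook_coeff (snd (box n k i j))) u"
      by (simp add: Tminus_def hook_coeff_def box_def fun_eq_iff)
  qed simp_all
  also have "\<dots> = Tprod n k (row_boxes n k i) m" by (simp add: Tprod_def row_boxes_def foldr_map o_def)
  finally show ?thesis .
qed

lemma hact_Xlam_rectangle: "hact n k (Xlam k (replicate k (n - k))) m = Tprod n k (rect_rows n k) m"
proof -
  have "hact n k (Xlam k (replicate k (n - k))) m
      = foldr (\<lambda>i u. hact n k (Qfac k (replicate k (n - k)) i) u) (rev [1..<k + 1]) m"
    unfolding Xlam_def hact_hprod by (simp only: foldr_map o_def length_replicate)
  also have "\<dots> = foldr (\<lambda>i u. Tprod n k (row_boxes n k i) u) (rev [1..<k + 1]) m"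
    by (rule foldr_cong) (auto simp: hact_Qfac_rectangle)
  also have "foldr (\<lambda>i u. Tprod n k (F i) u) is m' = Tprod n k (concat (map F is)) m'" for F "is" m'
    by (induct "is" arbitrary: m') (simp_all add: Tprod_append)
  finally show ?thesis by (simp add: rect_rows_def)
qed

lemma wword_rectangle: "wword k (replicate k (n - k)) = map fst (rect_rows n k)"
proof -
  have "Pword k (replicate k (n - k)) i = map fst (row_boxes n k i)" if "i \<in> set (rev [1..<k + 1])" for i
  proof -
    from that have i: "1 \<le> i" "i \<le> k" by auto
    have "map (\<lambda>j. k + j - i) [1..<N + 1] = [k + 1 - i..<k + N + 1 - i]" for N
      using i by (induct N) (auto simp: Suc_diff_le)
    moreover have "map fst (row_boxes n k i) = rev (map (\<lambda>j. k + j - i) [1..<n - k + 1])"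
      by (simp add: row_boxes_def box_def rev_map)
    moreover have "replicate k (n - k) ! (i - 1) = n - k" using i by simp
    ultimately show ?thesis by (simp add: Pword_def)
  qed
  then have "map (Pword k (replicate k (n - k))) (rev [1..<k + 1]) = map (\<lambda>i. map fst (row_boxes n k i)) (rev [1..<k + 1])"
    by (rule map_cong[OF refl])
  then show ?thesis unfolding wword_def rect_rows_def length_replicate by (simp only: map_concat map_map o_def)
qed

lemma act_word_row:
  assumes i: "1 \<le> i" "i \<le> k"
  shows "j \<le> n - k \<Longrightarrow> foldr swp (map fst (map (box n k i) (rev [1..<j + 1]))) (path_seq n k i 0) = path_seq n k i j"
proof (induct j)
  case (Suc j)
  then have j: "j + 1 \<le> n - k" by simp
  let ?xs = "replicate (k - i) True @ replicate j False"
  have "foldr swp (map fst (map (box n k i) (rev [1..<Suc j + 1]))) (path_seq n k i 0)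
      = swp (Suc (length ?xs)) (path_seq n k i j)"
    using Suc fst_box[OF i(2)] by simp
  also have "\<dots> = path_seq n k i (j + 1)" unfolding path_seq_step[OF j] swp_window ..
  finally show ?case by simp
qed simp

lemma act_word_rect_rows:
  assumes k: "1 \<le> k" "k \<le> n"
  shows "t \<le> k \<Longrightarrow> foldr swp (map fst (concat (map (row_boxes n k) (rev [1..<t + 1])))) (one_seq n k) = after_rows n k t"
proof (induct t)
  case 0
  then show ?case by (simp add: after_rows_def one_seq_def)
next
  case (Suc t)
  then have "foldr swp (map fst (concat (map (row_boxes n k) (rev [1..<Suc t + 1])))) (one_seq n k)
      = foldr swp (map fst (row_boxes n k (Suc t))) (path_seq n k (Suc t) 0)"
    by (simp add: path_seq_0)
  also have "\<dots> = path_seq n k (Suc t) (n - k)"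
    using act_word_row[of "Suc t" k "n - k" n] Suc.prems by (simp add: row_boxes_def)
  finally show ?case using path_seq_end[of "Suc t" k n] Suc.prems by simp
qed

theorem mainTheorem3:
  fixes n k :: nat
  assumes "1 \<le> k" and "k \<le> n - 1"
  shows "hact n k (Xlam k (replicate k (n - k))) (basis (one_seq n k))
           = CJ n k (act_word (wword k (replicate k (n - k))) (one_seq n k))"
proof -
  from assms have k: "1 \<le> k" "k + 1 \<le> n" by auto
  have "hact n k (Xlam k (replicate k (n - k))) (basis (one_seq n k)) = sign_vec n k"
    using Tprod_rect_one_eq_sign_vec[OF k] by (simp add: hact_Xlam_rectangle)
  moreover have "act_word (wword k (replicate k (n - k))) (one_seq n k) = low_seq n k"
    using act_word_rect_rows[of k n k] k
    by (simp add: act_word_def wword_rectangle rect_rows_def after_rows_def low_seq_def)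
  moreover have "CJ n k (low_seq n k) = sign_vec n k" using k by (intro CJ_low_seq) auto
  ultimately show ?thesis by simp
qed

end
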